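(* For every prime power $q$, all integers $n$, $r\le\lfloor n/2\rfloor$ and $0<\rho<r$, $$K_{\mathrm{C}}(q,n,r,\rho) \ge \frac{{n\brack r}}{V_{\mathrm{C}}(\rho) - \frac{\epsilon}{\delta}N_{\mathrm{C}}(\rho)},$$ where $\epsilon = \left\lceil \frac{b_\rho}{c_{\rho+1}}\right\rceil c_{\rho+1} - b_\rho$ and $\delta = N_{\mathrm{C}}(1) - c_\rho + 2\epsilon$.
   Context: ${m\brack k}=\prod_{i=0}^{k-1}\frac{q^m-q^i}{q^k-q^i}$ is the Gaussian binomial. $N_{\mathrm{C}}(d) = q^{d^2}{r\brack d}{n-r \brack d}$ and $V_{\mathrm{C}}(t) = \sum_{d=0}^t N_{\mathrm{C}}(d)$. For $0\le j\le r$, $c_j = {j\brack 1}^2$ and $b_j = q^{2j+1}{r-j\brack 1}{n-r-j\brack 1}$. $E_r(q,n)$ is the set of $r$-dimensional subspaces of $\mathrm{GF}(q)^n$ with injection distance $d_{\mathrm{I}}(U,V)=\dim(U+V)-\min\{\dim U,\dim V\}$; the covering radius of a nonempty $\mathcal{C}\subseteq E_r(q,n)$ is $\max_U\min_{C\in\mathcal{C}}d_{\mathrm{I}}(U,C)$, and $K_{\mathrm{C}}(q,n,r,\rho)$ is the minimum cardinality of a subset of $E_r(q,n)$ with covering radius at most $\rho$. *)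

theory Defs
  imports "HOL-Analysis.Analysis"
begin

definition gauss_binom :: "nat \<Rightarrow> nat \<Rightarrow> nat \<Rightarrow> real" where
  "gauss_binom q m k = (\<Prod>i<k. (real q ^ m - real q ^ i) / (real q ^ k - real q ^ i))"

definition NC :: "nat \<Rightarrow> nat \<Rightarrow> nat \<Rightarrow> nat \<Rightarrow> real" where
  "NC q n r d = real q ^ (d^2) * gauss_binom q r d * gauss_binom q (n - r) d"

definition VC :: "nat \<Rightarrow> nat \<Rightarrow> nat \<Rightarrow> nat \<Rightarrow> real" where
  "VC q n r t = (\<Sum>d\<le>t. NC q n r d)"

definition cC :: "nat \<Rightarrow> nat \<Rightarrow> real" where
  "cC q j = (gauss_binom q j 1)^2"

definition bC :: "nat \<Rightarrow> nat \<Rightarrow> nat \<Rightarrow> nat \<Rightarrow> real" where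
  "bC q n r j = real q ^ (2*j+1) * gauss_binom q (r - j) 1 * gauss_binom q (n - r - j) 1"

text \<open>E_r(q,n): r-dimensional subspaces of GF(q)^n, modelled as 'a^'n with
  'a a finite field (q = CARD('a)) and n = CARD('n).\<close>
definition Esub :: "nat \<Rightarrow> ('a::{field,finite} ^ 'n) set set" where
  "Esub r = {U. vec.subspace U \<and> vec.dim U = r}"

definition dI :: "('a::{field,finite} ^ 'n) set \<Rightarrow> ('a ^ 'n) set \<Rightarrow> nat" where
  "dI U V = vec.dim (vec.span (U \<union> V)) - min (vec.dim U) (vec.dim V)"

definition covrad :: "nat \<Rightarrow> ('a::{field,finite} ^ 'n) set set \<Rightarrow> nat" where
  "covrad r C = Max {Min {dI U D | D. D \<in> C} | U. U \<in> (Esub r :: ('a ^ 'n) set set)}"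

text \<open>K_C(q,n,r,rho) with q = CARD('a), n = CARD('n).\<close>
definition KC :: "'a::{field,finite} itself \<Rightarrow> 'n::finite itself \<Rightarrow> nat \<Rightarrow> nat \<Rightarrow> nat" where
  "KC _ _ r \<rho> = (LEAST k. \<exists>C. C \<subseteq> (Esub r :: ('a ^ 'n) set set) \<and> C \<noteq> {} \<and>
       card C = k \<and> covrad r C \<le> \<rho>)"

end

theory Submission
  imports Defs
begin

(* Let C be a code of covering radius rho in the Grassmannian, and call the excess of a
   subspace y the number of codewords within distance rho of y, minus one; the total excess is
   |C| V(rho) - [n r].  A subspace x is tight if it is covered exactly once, by a codeword c at
   distance exactly rho.  The b_rho neighbours of x that are farther from c must be covered by
   codewords at distance rho + 1 from x, each of which covers only c_(rho+1) of them, so the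
   neighbourhood of x carries excess at least eps.  A subspace of positive excess has at most
   N(1) - c_rho tight neighbours, hence eps |tight| <= (N(1) - c_rho) (total excess).  On the
   other hand the |C| N(rho) pairs (codeword, subspace at distance rho) are accounted for by the
   tight subspaces and at most twice the total excess.  Eliminating |tight| gives the bound.

   The counts N(d), b_j, c_j are those of the Grassmann graph; they are obtained by counting
   subspaces through ordered lists of vectors extending a basis of a fixed subspace. *)

section \<open>Gaussian binomial coefficients\<close>

definition qfact :: "nat \<Rightarrow> nat \<Rightarrow> real" where
  "qfact q j = (\<Prod>i<j. real q ^ (i + 1) - 1)"

lemma qfact_pos: "q \<ge> 2 \<Longrightarrow> qfact q j > 0"
  unfolding qfact_def
proof (rule prod_pos)
  fix i assume "q \<ge> 2"
  then have "real q \<le> real q ^ (i + 1)" by (simp add: power_increasing[of 1, simplified])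
  with \<open>q \<ge> 2\<close> show "0 < real q ^ (i + 1) - 1" by linarith
qed

lemma qfact_diff_mult:
  assumes "k \<le> m"
  shows "qfact q (m - k) * (\<Prod>i<k. real q ^ (m - i) - 1) = qfact q m"
  using assms
proof (induction k)
  case (Suc k)
  have "m - k = Suc (m - Suc k)" using Suc.prems by simp
  then have "qfact q (m - k) = qfact q (m - Suc k) * (real q ^ (m - k) - 1)"
    by (simp add: qfact_def)
  then show ?case using Suc by (simp add: mult_ac)
qed simp

lemma gauss_binom_eq_qfact:
  assumes q: "q \<ge> 2" and km: "k \<le> m"
  shows "gauss_binom q m k = qfact q m / (qfact q k * qfact q (m - k))"
proof -
  have "gauss_binom q m k = (\<Prod>i<k. (real q ^ (m - i) - 1) / (real q ^ (k - i) - 1))"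
    unfolding gauss_binom_def
  proof (rule prod.cong[OF refl])
    fix i assume "i \<in> {..<k}"
    then have "i \<le> k" "i \<le> m" using km by auto
    then have "real q ^ m - real q ^ i = real q ^ i * (real q ^ (m - i) - 1)"
      and "real q ^ k - real q ^ i = real q ^ i * (real q ^ (k - i) - 1)"
      by (simp_all add: right_diff_distrib flip: power_add)
    then show "(real q ^ m - real q ^ i) / (real q ^ k - real q ^ i)
        = (real q ^ (m - i) - 1) / (real q ^ (k - i) - 1)"
      using q by simp
  qed
  also have "\<dots> = (\<Prod>i<k. real q ^ (m - i) - 1) / (\<Prod>i<k. real q ^ (k - i) - 1)"
    by (rule prod_dividef)
  also have "(\<Prod>i<k. real q ^ (k - i) - 1) = qfact q k"
    unfolding qfact_def
    by (rule prod.nat_diff_reindex[symmetric, THEN trans]) (rule prod.cong, auto simp: Suc_diff_Suc)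
  also have "(\<Prod>i<k. real q ^ (m - i) - 1) = qfact q m / qfact q (m - k)"
    using qfact_diff_mult[OF km, of q] qfact_pos[OF q, of "m - k"] by (simp add: field_simps)
  finally show ?thesis by simp
qed

lemma gauss_binom_symmetric:
  "q \<ge> 2 \<Longrightarrow> k \<le> m \<Longrightarrow> gauss_binom q m (m - k) = gauss_binom q m k"
  by (simp add: gauss_binom_eq_qfact mult.commute)

lemma gauss_binom_pos: "q \<ge> 2 \<Longrightarrow> k \<le> m \<Longrightarrow> gauss_binom q m k > 0"
  by (simp add: gauss_binom_eq_qfact qfact_pos)

lemma gauss_binom_one: "gauss_binom q m 1 = (real q ^ m - 1) / (real q - 1)"
  by (simp add: gauss_binom_def)

lemma gauss_binom_one_mono:
  assumes "q \<ge> 2" "a \<le> b" shows "gauss_binom q a 1 \<le> gauss_binom q b 1"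
proof -
  have "real q ^ a \<le> real q ^ b" using assms by (intro power_increasing) auto
  then show ?thesis using assms unfolding gauss_binom_one by (simp add: divide_right_mono)
qed

lemma gauss_binom_one_diff:
  assumes "a \<le> b"
  shows "gauss_binom q b 1 - gauss_binom q a 1 = real q ^ a * gauss_binom q (b - a) 1"
proof -
  have "real q ^ b = real q ^ a * real q ^ (b - a)" using assms by (simp flip: power_add)
  then show ?thesis unfolding gauss_binom_one by (simp add: diff_divide_distrib[symmetric] right_diff_distrib)
qed

lemma prod_power_diff_pos:
  assumes "q \<ge> 2" "\<And>i. i < k \<Longrightarrow> f i < m"
  shows "(\<Prod>i<k. real q ^ m - real q ^ f i) > 0"
proof (rule prod_pos)
  fix i assume "i \<in> {..<k}"
  then have "real q ^ f i < real q ^ m"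
    using assms by (intro power_strict_increasing) auto
  then show "0 < real q ^ m - real q ^ f i" by simp
qed

lemma gauss_binom_shift:
  assumes "q \<ge> 2"
  shows "(\<Prod>i<k. real q ^ (w + m) - real q ^ (w + i)) / (\<Prod>i<k. real q ^ (w + k) - real q ^ (w + i))
    = gauss_binom q m k"
proof -
  have "(real q ^ (w + m) - real q ^ (w + i)) / (real q ^ (w + k) - real q ^ (w + i))
      = (real q ^ m - real q ^ i) / (real q ^ k - real q ^ i)" for i
    using assms by (simp add: power_add flip: right_diff_distrib)
  then show ?thesis by (simp add: gauss_binom_def flip: prod_dividef)
qed

lemma gauss_binom_shift_scaled:
  assumes "q \<ge> 2" "k \<le> r" "r \<le> n"
  shows "(\<Prod>i<k. real q ^ n - real q ^ (r + i)) / (\<Prod>i<k. real q ^ r - real q ^ (r - k + i))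
    = real q ^ (k\<^sup>2) * gauss_binom q (n - r) k"
proof -
  have "real q ^ n - real q ^ (r + i) = real q ^ k * (real q ^ (r - k + (n - r)) - real q ^ (r - k + i))" for i
  proof -
    have "n = k + (r - k + (n - r))" "r + i = k + (r - k + i)" using assms by auto
    then show ?thesis by (metis power_add right_diff_distrib)
  qed
  then have "(\<Prod>i<k. real q ^ n - real q ^ (r + i))
      = (real q ^ k) ^ k * (\<Prod>i<k. real q ^ (r - k + (n - r)) - real q ^ (r - k + i))"
    by (simp add: prod.distrib)
  moreover have "(\<Prod>i<k. real q ^ r - real q ^ (r - k + i)) = (\<Prod>i<k. real q ^ (r - k + k) - real q ^ (r - k + i))"
    using assms by simp
  ultimately show ?thesis
    using gauss_binom_shift[OF assms(1), of "r - k" "n - r" k]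
    by (simp add: power_mult[symmetric] power2_eq_square flip: times_divide_eq_right)
qed

section \<open>Counting subspaces\<close>

lemma card_UN_fibres:
  assumes "finite I" "\<And>i. i \<in> I \<Longrightarrow> finite (G i)" "\<And>i y. i \<in> I \<Longrightarrow> y \<in> G i \<Longrightarrow> f y = i"
  shows "card (\<Union>i\<in>I. G i) = (\<Sum>i\<in>I. card (G i))"
proof (rule card_UN_disjoint)
  show "\<forall>i\<in>I. \<forall>j\<in>I. i \<noteq> j \<longrightarrow> G i \<inter> G j = {}"
    using assms(3) by blast
qed (use assms(1,2) in auto)

lemma card_field_ge_2: "CARD('a::{field,finite}) \<ge> 2"
proof -
  have "card {0::'a, 1} \<le> CARD('a)" by (rule card_mono) auto
  then show ?thesis by simp
qed

lemma card_span_insert: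
  fixes B :: "('a::{field,finite}^'n) set"
  assumes a: "a \<notin> vec.span B"
  shows "card (vec.span (insert a B)) = CARD('a) * card (vec.span B)"
proof -
  let ?f = "\<lambda>(k, y). k *s a + y"
  have "vec.span (insert a B) = ?f ` (UNIV \<times> vec.span B)"
  proof (intro subset_antisym subsetI)
    fix x assume "x \<in> vec.span (insert a B)"
    then obtain k where "x - k *s a \<in> vec.span B" using vec.span_insert by blast
    then show "x \<in> ?f ` (UNIV \<times> vec.span B)" by (auto intro!: image_eqI[where x="(k, x - k *s a)"])
  next
    fix x assume "x \<in> ?f ` (UNIV \<times> vec.span B)"
    then obtain k y where x: "x = k *s a + y" and y: "y \<in> vec.span B" by auto
    have "y \<in> vec.span (insert a B)" using y vec.span_mono[of B "insert a B"] by blast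
    moreover have "k *s a \<in> vec.span (insert a B)" by (simp add: vec.span_base vec.span_scale)
    ultimately show "x \<in> vec.span (insert a B)" by (simp add: x vec.span_add)
  qed
  moreover have "inj_on ?f (UNIV \<times> vec.span B)"
  proof (rule inj_onI, clarify)
    fix k y k' y' assume y: "y \<in> vec.span B" "y' \<in> vec.span B" and eq: "k *s a + y = k' *s a + y'"
    have "(k - k') *s a = y' - y"
      using eq by (simp add: algebra_simps vector_sub_rdistrib)
    then have "(k - k') *s a \<in> vec.span B"
      using vec.span_diff[OF y(2) y(1)] by simp
    have "k = k'"
    proof (rule ccontr)
      assume "k \<noteq> k'"
      then have "inverse (k - k') * (k - k') = 1" by simp
      then have "a = inverse (k - k') *s ((k - k') *s a)"
        by (simp only: vector_smult_assoc vector_smult_lid)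
      then show False
        using a vec.span_scale[OF \<open>(k - k') *s a \<in> vec.span B\<close>, of "inverse (k - k')"] by simp
    qed
    with eq show "k = k' \<and> y = y'" by simp
  qed
  ultimately show ?thesis by (simp add: card_image card_cartesian_product)
qed

lemma card_span_independent:
  fixes B :: "('a::{field,finite}^'n) set"
  assumes "vec.independent B"
  shows "card (vec.span B) = CARD('a) ^ card B"
proof -
  have "finite B" using assms vec.finiteI_independent by blast
  then show ?thesis using assms
  proof (induction B rule: finite_induct)
    case (insert a B)
    then show ?case
      using card_span_insert[of a B] vec.independent_insert[of a B] by simp
  qed simp
qed

lemma card_subspace:
  fixes S :: "('a::{field,finite}^'n) set"
  assumes "vec.subspace S"
  shows "card S = CARD('a) ^ vec.dim S"
proof -
  obtain B where "B \<subseteq> S" "vec.independent B" "S \<subseteq> vec.span B" "card B = vec.dim S"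
    using vec.basis_exists by blast
  then show ?thesis using vec.span_subspace[of B S] assms card_span_independent by metis
qed

definition independent_over :: "('a::{field,finite}^'n) set \<Rightarrow> ('a^'n) set \<Rightarrow> ('a^'n) list \<Rightarrow> bool" where
  "independent_over W S vs \<longleftrightarrow> (\<forall>i<length vs. vs ! i \<in> S \<and> vs ! i \<notin> vec.span (W \<union> set (take i vs)))"

definition independent_lists :: "('a::{field,finite}^'n) set \<Rightarrow> ('a^'n) set \<Rightarrow> nat \<Rightarrow> ('a^'n) list set" where
  "independent_lists W S k = {vs. length vs = k \<and> independent_over W S vs}"

lemma independent_over_Nil [simp]: "independent_over W S []"
  by (simp add: independent_over_def)

lemma independent_over_snoc:
  "independent_over W S (vs @ [v]) \<longleftrightarrow>
    independent_over W S vs \<and> v \<in> S \<and> v \<notin> vec.span (W \<union> set vs)"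
  unfolding independent_over_def by (auto simp: nth_append less_Suc_eq)

lemma independent_over_subset: "independent_over W S vs \<Longrightarrow> set vs \<subseteq> S"
  unfolding independent_over_def by (auto simp: in_set_conv_nth)

lemma independent_over_mono:
  "independent_over W S vs \<Longrightarrow> set vs \<subseteq> T \<Longrightarrow> independent_over W T vs"
  unfolding independent_over_def by (meson nth_mem subsetD)

lemma independent_over_antimono:
  "W' \<subseteq> W \<Longrightarrow> independent_over W S vs \<Longrightarrow> independent_over W' S vs"
  unfolding independent_over_def by (meson Un_mono order_refl subsetD vec.span_mono)

lemma dim_span_independent_over:
  fixes W :: "('a::{field,finite}^'n) set"
  assumes "vec.subspace W" "independent_over W S vs"
  shows "vec.dim (vec.span (W \<union> set vs)) = vec.dim W + length vs"
  using assms(2)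
proof (induction vs rule: rev_induct)
  case Nil
  then show ?case using assms(1) by (simp add: vec.span_eq_iff)
next
  case (snoc v vs)
  then have "independent_over W S vs" "v \<notin> vec.span (W \<union> set vs)"
    by (simp_all add: independent_over_snoc)
  moreover have "W \<union> set (vs @ [v]) = insert v (W \<union> set vs)" by auto
  ultimately show ?case using snoc.IH by (simp add: vec.dim_insert)
qed

lemma span_independent_over_subset:
  assumes "vec.subspace S" "W \<subseteq> S" "independent_over W S vs"
  shows "vec.span (W \<union> set vs) \<subseteq> S"
  using assms independent_over_subset vec.span_minimal by (metis Un_least)

lemma span_independent_over_eq:
  fixes W :: "('a::{field,finite}^'n) set"
  assumes W: "vec.subspace W" and U: "vec.subspace U" "W \<subseteq> U"
    and dim: "vec.dim U = vec.dim W + length vs" and vs: "independent_over W U vs"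
  shows "vec.span (W \<union> set vs) = U"
proof (rule vec.subspace_dim_equal)
  show "vec.span (W \<union> set vs) \<subseteq> U" using span_independent_over_subset[OF U vs] .
  show "vec.dim U \<le> vec.dim (vec.span (W \<union> set vs))"
    using dim_span_independent_over[OF W vs] dim by simp
qed (simp_all add: U vec.subspace_span)

lemma finite_independent_lists:
  "finite (independent_lists W S k :: ('a::{field,finite}^'n) list set)"
proof (rule finite_subset)
  show "independent_lists W S k \<subseteq> {xs. set xs \<subseteq> UNIV \<and> length xs = k}"
    by (auto simp: independent_lists_def)
  show "finite {xs. set xs \<subseteq> (UNIV :: ('a^'n) set) \<and> length xs = k}"
    by (rule finite_lists_length_eq) simp
qed

lemma card_independent_lists:
  fixes W :: "('a::{field,finite}^'n) set"
  assumes W: "vec.subspace W" and S: "vec.subspace S" "W \<subseteq> S"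
  shows "real (card (independent_lists W S k))
    = (\<Prod>i<k. real CARD('a) ^ vec.dim S - real CARD('a) ^ (vec.dim W + i))"
proof (induction k)
  case 0
  have "independent_lists W S 0 = {[]}" by (auto simp: independent_lists_def)
  then show ?case by simp
next
  case (Suc k)
  let ?A = "SIGMA vs:independent_lists W S k. S - vec.span (W \<union> set vs)"
  have "independent_lists W S (Suc k) = (\<lambda>(vs, v). vs @ [v]) ` ?A"
    by (force simp: independent_lists_def independent_over_snoc length_Suc_conv_rev)
  moreover have "inj_on (\<lambda>(vs, v). vs @ [v]) ?A" by (auto intro!: inj_onI)
  ultimately have "card (independent_lists W S (Suc k))
      = (\<Sum>vs\<in>independent_lists W S k. card (S - vec.span (W \<union> set vs)))"
    by (simp add: card_image card_SigmaI finite_independent_lists)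
  moreover have "real (card (S - vec.span (W \<union> set vs)))
      = real CARD('a) ^ vec.dim S - real CARD('a) ^ (vec.dim W + k)"
    if "vs \<in> independent_lists W S k" for vs
  proof -
    have vs: "independent_over W S vs" "length vs = k"
      using that by (auto simp: independent_lists_def)
    have sub: "vec.span (W \<union> set vs) \<subseteq> S" by (rule span_independent_over_subset[OF S vs(1)])
    then have "card (vec.span (W \<union> set vs)) \<le> card S" by (simp add: card_mono)
    then show ?thesis
      using card_Diff_subset[OF finite sub] card_subspace[OF S(1)]
        card_subspace[OF vec.subspace_span[of "W \<union> set vs"]]
        dim_span_independent_over[OF W vs(1)] vs(2)
      by (simp add: of_nat_diff)
  qed
  ultimately show ?case using Suc.IH by (simp add: mult.commute)
qed

definition subspaces_between :: "('a::{field,finite}^'n) set \<Rightarrow> ('a^'n) set \<Rightarrow> nat \<Rightarrow> ('a^'n) set set" where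
  "subspaces_between W S m = {U. vec.subspace U \<and> W \<subseteq> U \<and> U \<subseteq> S \<and> vec.dim U = m}"

lemma finite_subspaces_between: "finite (subspaces_between W S m)"
  by (rule finite_subset[of _ UNIV]) auto

lemma independent_lists_eq_UN:
  fixes W :: "('a::{field,finite}^'n) set"
  assumes W: "vec.subspace W" and S: "vec.subspace S" "W \<subseteq> S"
  shows "independent_lists W S k
    = (\<Union>U\<in>subspaces_between W S (vec.dim W + k). independent_lists W U k)"
proof (intro subset_antisym subsetI)
  fix vs assume "vs \<in> independent_lists W S k"
  then have vs: "independent_over W S vs" "length vs = k" by (auto simp: independent_lists_def)
  let ?U = "vec.span (W \<union> set vs)"
  have "?U \<in> subspaces_between W S (vec.dim W + k)"
    using span_independent_over_subset[OF S vs(1)] dim_span_independent_over[OF W vs(1)] vs(2)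
    by (auto simp: subspaces_between_def vec.subspace_span intro: vec.span_base)
  moreover have "vs \<in> independent_lists W ?U k"
    using vs independent_over_mono[OF vs(1), of ?U] vec.span_superset[of "W \<union> set vs"]
    by (auto simp: independent_lists_def)
  ultimately show "vs \<in> (\<Union>U\<in>subspaces_between W S (vec.dim W + k). independent_lists W U k)"
    by blast
next
  fix vs assume "vs \<in> (\<Union>U\<in>subspaces_between W S (vec.dim W + k). independent_lists W U k)"
  then show "vs \<in> independent_lists W S k"
    by (force simp: independent_lists_def subspaces_between_def
        intro: independent_over_mono dest: independent_over_subset)
qed

lemma card_subspaces_between:
  fixes W :: "('a::{field,finite}^'n) set"
  assumes W: "vec.subspace W" and S: "vec.subspace S" "W \<subseteq> S"
    and k: "vec.dim W + k \<le> vec.dim S"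
  shows "real (card (subspaces_between W S (vec.dim W + k)))
    = gauss_binom CARD('a) (vec.dim S - vec.dim W) k"
proof -
  let ?q = "real CARD('a)" and ?w = "vec.dim W" and ?I = "subspaces_between W S (vec.dim W + k)"
  let ?P = "\<Prod>i<k. ?q ^ (?w + (vec.dim S - ?w)) - ?q ^ (?w + i)"
    and ?Q = "\<Prod>i<k. ?q ^ (?w + k) - ?q ^ (?w + i)"
  have q: "CARD('a) \<ge> 2" by (rule card_field_ge_2)
  have "card (independent_lists W S k) = (\<Sum>U\<in>?I. card (independent_lists W U k))"
    unfolding independent_lists_eq_UN[OF W S]
  proof (rule card_UN_fibres[where f="\<lambda>vs. vec.span (W \<union> set vs)"])
    fix U vs assume "U \<in> ?I" "vs \<in> independent_lists W U k"
    then show "vec.span (W \<union> set vs) = U"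
      by (intro span_independent_over_eq[OF W]) (auto simp: subspaces_between_def independent_lists_def)
  qed (simp_all add: finite_subspaces_between finite_independent_lists)
  then have "real (card (independent_lists W S k)) = (\<Sum>U\<in>?I. real (card (independent_lists W U k)))"
    by simp
  also have "\<dots> = real (card ?I) * ?Q"
    using card_independent_lists[OF W] by (simp add: subspaces_between_def)
  finally have eq: "real (card ?I) * ?Q = ?P"
    using card_independent_lists[OF W S] k by simp
  have "?Q > 0" by (rule prod_power_diff_pos[OF q]) simp
  then have "real (card ?I) = ?P / ?Q"
    using eq by (intro eq_divide_imp) linarith+
  also have "\<dots> = gauss_binom CARD('a) (vec.dim S - ?w) k"
    by (rule gauss_binom_shift[OF q])
  finally show ?thesis .
qed

section \<open>Injection distance and its spheres\<close>

lemma dim_span_Un_plus_dim_Int: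
  fixes A :: "('a::{field,finite}^'n) set"
  assumes "vec.subspace A" "vec.subspace B"
  shows "vec.dim (vec.span (A \<union> B)) + vec.dim (A \<inter> B) = vec.dim A + vec.dim B"
  using vec.dim_sums_Int[OF assms] assms by (simp add: vec.span_Un vec.span_eq_iff[THEN iffD2])

lemma Int_span_Un_modular:
  fixes A :: "('a::{field,finite}^'n) set"
  assumes A: "vec.subspace A" and B: "vec.subspace B" and X: "vec.subspace X" and AX: "A \<subseteq> X"
  shows "X \<inter> vec.span (A \<union> B) = vec.span (A \<union> (X \<inter> B))"
proof (intro subset_antisym subsetI)
  fix z assume z: "z \<in> X \<inter> vec.span (A \<union> B)"
  then obtain a b where ab: "z = a + b" "a \<in> A" "b \<in> B"
    using A B by (auto simp: vec.span_Un vec.span_eq_iff[THEN iffD2])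
  then have "b \<in> X" using z AX X vec.subspace_diff[of X z a] by auto
  then show "z \<in> vec.span (A \<union> (X \<inter> B))"
    using ab by (auto intro: vec.span_add vec.span_base)
next
  fix z assume "z \<in> vec.span (A \<union> (X \<inter> B))"
  then show "z \<in> X \<inter> vec.span (A \<union> B)"
    using vec.span_minimal[of "A \<union> (X \<inter> B)" X] AX X vec.span_mono[of "A \<union> (X \<inter> B)" "A \<union> B"]
    by blast
qed

lemma Esub_iff: "U \<in> Esub r \<longleftrightarrow> vec.subspace U \<and> vec.dim U = r"
  by (simp add: Esub_def)

lemma finite_Esub: "finite (Esub r :: ('a::{field,finite}^'n) set set)"
  by (rule finite_subset[of _ UNIV]) auto

lemma dim_Int_le:
  fixes U :: "('a::{field,finite}^'n) set"
  shows "vec.dim (U \<inter> V) \<le> vec.dim U"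
  by (rule vec.dim_subset) blast

lemma dI_eq_dim_Int:
  fixes U :: "('a::{field,finite}^'n) set"
  assumes "U \<in> Esub r" "V \<in> Esub r"
  shows "dI U V = r - vec.dim (U \<inter> V)"
  using dim_span_Un_plus_dim_Int[of U V] assms unfolding dI_def Esub_iff by auto

lemma dim_Int_eq_dI:
  fixes U :: "('a::{field,finite}^'n) set"
  assumes "U \<in> Esub r" "V \<in> Esub r"
  shows "vec.dim (U \<inter> V) = r - dI U V"
  using dI_eq_dim_Int[OF assms] dim_Int_le[of U V] assms by (simp add: Esub_iff)

lemma dI_commute:
  fixes U :: "('a::{field,finite}^'n) set"
  assumes "U \<in> Esub r" "V \<in> Esub r"
  shows "dI U V = dI V U"
  using assms by (simp add: dI_eq_dim_Int Int_commute)

lemma dI_le: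
  fixes U :: "('a::{field,finite}^'n) set"
  assumes "U \<in> Esub r" "V \<in> Esub r"
  shows "dI U V \<le> r"
  using assms by (simp add: dI_eq_dim_Int)

lemma dI_self:
  fixes U :: "('a::{field,finite}^'n) set"
  assumes "U \<in> Esub r"
  shows "dI U U = 0"
  using dI_eq_dim_Int[OF assms assms] assms by (simp add: Esub_iff)

lemma dI_triangle:
  fixes x :: "('a::{field,finite}^'n) set"
  assumes x: "x \<in> Esub r" and y: "y \<in> Esub r" and z: "z \<in> Esub r"
  shows "dI x z \<le> dI x y + dI y z"
proof -
  have sx: "vec.subspace x" and sy: "vec.subspace y" and sz: "vec.subspace z"
    using x y z by (auto simp: Esub_iff)
  have "vec.dim (vec.span ((x \<inter> y) \<union> (y \<inter> z))) \<le> vec.dim y"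
    using sy by (intro vec.dim_subset vec.span_minimal) auto
  moreover have "vec.dim ((x \<inter> y) \<inter> (y \<inter> z)) \<le> vec.dim (x \<inter> z)"
    by (rule vec.dim_subset) blast
  moreover note dim_span_Un_plus_dim_Int[OF vec.subspace_inter[OF sx sy] vec.subspace_inter[OF sy sz]]
  moreover have "vec.dim (x \<inter> y) \<le> r" "vec.dim (y \<inter> z) \<le> r" "vec.dim (x \<inter> z) \<le> r"
    using dim_Int_le[of x] dim_Int_le[of y] x y by (auto simp: Esub_iff)
  ultimately show ?thesis
    using y by (simp add: dI_eq_dim_Int[OF x y] dI_eq_dim_Int[OF y z] dI_eq_dim_Int[OF x z] Esub_iff)
qed

lemma card_Esub:
  assumes "r \<le> CARD('n)"
  shows "real (card (Esub r :: ('a::{field,finite}^'n) set set)) = gauss_binom CARD('a) CARD('n) r"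
proof -
  have "subspaces_between {0} UNIV (vec.dim {0::'a^'n} + r) = (Esub r :: ('a^'n) set set)"
    by (auto simp: subspaces_between_def Esub_def vec.subspace_0)
  moreover have "real (card (subspaces_between {0::'a^'n} UNIV (vec.dim {0::'a^'n} + r)))
      = gauss_binom CARD('a) (vec.dim (UNIV::('a^'n) set) - vec.dim {0::'a^'n}) r"
    by (rule card_subspaces_between) (use assms vec.subspace_0 in \<open>auto simp: card_cart_basis\<close>)
  ultimately show ?thesis by (simp add: card_cart_basis)
qed

definition subspaces_meeting :: "nat \<Rightarrow> ('a::{field,finite}^'n) set \<Rightarrow> ('a^'n) set \<Rightarrow> ('a^'n) set set" where
  "subspaces_meeting r c D = {U \<in> Esub r. U \<inter> c = D}"

lemma independent_over_Int_subset:
  fixes U :: "('a::{field,finite}^'n) set"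
  assumes U: "vec.subspace U" and c: "vec.subspace c" and UcD: "U \<inter> c \<subseteq> D"
    and vs: "independent_over D U vs"
  shows "independent_over c UNIV vs"
  unfolding independent_over_def
proof (intro allI impI conjI notI)
  fix j assume j: "j < length vs"
  let ?T = "set (take j vs)"
  have vj: "vs ! j \<in> U" "vs ! j \<notin> vec.span (D \<union> ?T)"
    using vs j unfolding independent_over_def by auto
  assume "vs ! j \<in> vec.span (c \<union> ?T)"
  then obtain x y where xy: "vs ! j = x + y" "x \<in> c" "y \<in> vec.span ?T"
    using c by (auto simp: vec.span_Un vec.span_eq_iff[THEN iffD2])
  have "?T \<subseteq> U"
    using independent_over_subset[OF vs] set_take_subset[of j vs] by blast
  then have "y \<in> U" using xy(3) vec.span_minimal[OF _ U] by blast
  then have "x \<in> D" using xy(1,2) UcD vec.subspace_diff[OF U vj(1), of y] by auto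
  then have "x + y \<in> vec.span (D \<union> ?T)"
    using xy(3) vec.span_mono[of ?T "D \<union> ?T"] by (blast intro: vec.span_add vec.span_base)
  then show False using vj(2) xy(1) by simp
qed simp

lemma span_independent_over_meeting:
  fixes c :: "('a::{field,finite}^'n) set"
  assumes c: "c \<in> Esub r" and D: "vec.subspace D" "D \<subseteq> c" "vec.dim D = r - d" and "d \<le> r"
    and vs: "vs \<in> independent_lists c UNIV d"
  shows "vec.span (D \<union> set vs) \<in> subspaces_meeting r c D"
proof -
  let ?U = "vec.span (D \<union> set vs)"
  have sc: "vec.subspace c" "vec.dim c = r" using c by (auto simp: Esub_iff)
  have vs: "independent_over c UNIV vs" "length vs = d" using vs by (auto simp: independent_lists_def)
  have dim_U: "vec.dim ?U = r"
    using dim_span_independent_over[OF D(1) independent_over_antimono[OF D(2) vs(1)]] vs(2) D(3) \<open>d \<le> r\<close>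
    by simp
  have "vec.span (?U \<union> c) = vec.span (c \<union> set vs)"
    unfolding vec.span_eq
  proof
    show "?U \<union> c \<subseteq> vec.span (c \<union> set vs)"
      using D(2) vec.span_mono[of "D \<union> set vs" "c \<union> set vs"] vec.span_superset[of "c \<union> set vs"]
      by blast
    show "c \<union> set vs \<subseteq> vec.span (?U \<union> c)"
      using vec.span_superset[of "?U \<union> c"] vec.span_superset[of "D \<union> set vs"] by blast
  qed
  then have "vec.dim (vec.span (?U \<union> c)) = r + d"
    using dim_span_independent_over[OF sc(1) vs(1)] sc(2) vs(2) by simp
  then have dim_Uc: "vec.dim (?U \<inter> c) = r - d"
    using dim_span_Un_plus_dim_Int[OF vec.subspace_span[of "D \<union> set vs"] sc(1)] dim_U sc(2) by simp
  have "D = ?U \<inter> c"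
  proof (rule vec.subspace_dim_equal)
    show "D \<subseteq> ?U \<inter> c" using D(2) vec.span_superset[of "D \<union> set vs"] by blast
  qed (use D dim_Uc vec.subspace_inter[OF vec.subspace_span sc(1)] in auto)
  then show ?thesis using dim_U by (simp add: subspaces_meeting_def Esub_iff vec.subspace_span)
qed

lemma independent_lists_eq_UN_meeting:
  fixes c :: "('a::{field,finite}^'n) set"
  assumes c: "c \<in> Esub r" and D: "vec.subspace D" "D \<subseteq> c" "vec.dim D = r - d" and "d \<le> r"
  shows "independent_lists c UNIV d = (\<Union>U\<in>subspaces_meeting r c D. independent_lists D U d)"
proof (intro subset_antisym subsetI)
  fix vs assume vs: "vs \<in> independent_lists c UNIV d"
  let ?U = "vec.span (D \<union> set vs)"
  have "vs \<in> independent_lists D ?U d"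
    using vs independent_over_mono[OF independent_over_antimono[OF D(2)], of UNIV vs ?U]
      vec.span_superset[of "D \<union> set vs"]
    by (auto simp: independent_lists_def)
  then show "vs \<in> (\<Union>U\<in>subspaces_meeting r c D. independent_lists D U d)"
    using span_independent_over_meeting[OF assms vs] by blast
next
  fix vs assume "vs \<in> (\<Union>U\<in>subspaces_meeting r c D. independent_lists D U d)"
  then obtain U where "U \<in> subspaces_meeting r c D" "vs \<in> independent_lists D U d" by blast
  then show "vs \<in> independent_lists c UNIV d"
    using independent_over_Int_subset[of U c D vs] c
    by (auto simp: subspaces_meeting_def independent_lists_def Esub_iff)
qed

lemma card_subspaces_meeting:
  fixes c :: "('a::{field,finite}^'n) set"
  assumes c: "c \<in> Esub r" and D: "vec.subspace D" "D \<subseteq> c" "vec.dim D = r - d"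
    and "d \<le> r" "r + d \<le> CARD('n)"
  shows "real (card (subspaces_meeting r c D)) = real CARD('a) ^ (d\<^sup>2) * gauss_binom CARD('a) (CARD('n) - r) d"
proof -
  let ?q = "real CARD('a)" and ?M = "subspaces_meeting r c D"
  have q: "CARD('a) \<ge> 2" by (rule card_field_ge_2)
  have sc: "vec.subspace c" "vec.dim c = r" using c by (auto simp: Esub_iff)
  have "card (independent_lists c UNIV d) = (\<Sum>U\<in>?M. card (independent_lists D U d))"
    unfolding independent_lists_eq_UN_meeting[OF c D \<open>d \<le> r\<close>]
  proof (rule card_UN_fibres[where f="\<lambda>vs. vec.span (D \<union> set vs)"])
    fix U vs assume "U \<in> ?M" "vs \<in> independent_lists D U d"
    then show "vec.span (D \<union> set vs) = U"
      using D \<open>d \<le> r\<close> by (intro span_independent_over_eq[OF D(1)])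
        (auto simp: subspaces_meeting_def independent_lists_def Esub_iff)
  qed (simp_all add: finite_independent_lists finite_subset[OF _ finite_Esub] subspaces_meeting_def)
  then have "real (card (independent_lists c UNIV d)) = (\<Sum>U\<in>?M. real (card (independent_lists D U d)))"
    by simp
  also have "\<dots> = (\<Sum>U\<in>?M. \<Prod>i<d. ?q ^ r - ?q ^ (r - d + i))"
  proof (rule sum.cong[OF refl])
    fix U assume "U \<in> ?M"
    then have "vec.subspace U" "vec.dim U = r" "D \<subseteq> U" by (auto simp: subspaces_meeting_def Esub_iff)
    then show "real (card (independent_lists D U d)) = (\<Prod>i<d. ?q ^ r - ?q ^ (r - d + i))"
      using card_independent_lists[OF D(1)] D(3) by simp
  qed
  finally have eq: "real (card ?M) * (\<Prod>i<d. ?q ^ r - ?q ^ (r - d + i)) = (\<Prod>i<d. ?q ^ CARD('n) - ?q ^ (r + i))"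
    using card_independent_lists[OF sc(1) vec.subspace_UNIV] sc(2) by (simp add: card_cart_basis)
  have "(\<Prod>i<d. ?q ^ r - ?q ^ (r - d + i)) > 0"
    using \<open>d \<le> r\<close> by (intro prod_power_diff_pos[OF q]) auto
  then have "real (card ?M)
      = (\<Prod>i<d. ?q ^ CARD('n) - ?q ^ (r + i)) / (\<Prod>i<d. ?q ^ r - ?q ^ (r - d + i))"
    using eq by (intro eq_divide_imp) linarith+
  then show ?thesis
    using gauss_binom_shift_scaled[OF q \<open>d \<le> r\<close>, of "CARD('n)"] \<open>r + d \<le> CARD('n)\<close>
    by simp
qed

lemma dI_sphere_eq_UN:
  fixes c :: "('a::{field,finite}^'n) set"
  assumes c: "c \<in> Esub r" and "d \<le> r"
  shows "{U \<in> Esub r. dI U c = d} = (\<Union>D\<in>subspaces_between {0} c (r - d). subspaces_meeting r c D)"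
proof (intro subset_antisym subsetI)
  fix U assume U: "U \<in> {U \<in> Esub r. dI U c = d}"
  then have "vec.subspace U" "vec.subspace c" "vec.dim (U \<inter> c) = r - d"
    using dim_Int_eq_dI[OF _ c, of U] c by (auto simp: Esub_iff)
  then have "U \<inter> c \<in> subspaces_between {0} c (r - d)"
    by (auto simp: subspaces_between_def vec.subspace_0 vec.subspace_inter)
  moreover have "U \<in> subspaces_meeting r c (U \<inter> c)" using U by (simp add: subspaces_meeting_def)
  ultimately show "U \<in> (\<Union>D\<in>subspaces_between {0} c (r - d). subspaces_meeting r c D)" by blast
next
  fix U assume "U \<in> (\<Union>D\<in>subspaces_between {0} c (r - d). subspaces_meeting r c D)"
  then have "U \<in> Esub r" "vec.dim (U \<inter> c) = r - d"
    by (auto simp: subspaces_meeting_def subspaces_between_def)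
  then show "U \<in> {U \<in> Esub r. dI U c = d}" using dI_eq_dim_Int[OF _ c] \<open>d \<le> r\<close> by simp
qed

lemma card_dI_sphere:
  fixes c :: "('a::{field,finite}^'n) set"
  assumes c: "c \<in> Esub r" and "d \<le> r" "r + d \<le> CARD('n)"
  shows "real (card {U \<in> Esub r. dI U c = d}) = NC CARD('a) CARD('n) r d"
proof -
  let ?Ds = "subspaces_between {0} c (r - d)"
  have sc: "vec.subspace c" "vec.dim c = r" using c by (auto simp: Esub_iff)
  have "card {U \<in> Esub r. dI U c = d} = (\<Sum>D\<in>?Ds. card (subspaces_meeting r c D))"
    unfolding dI_sphere_eq_UN[OF c \<open>d \<le> r\<close>]
    by (rule card_UN_fibres[where f="\<lambda>U. U \<inter> c"])
      (auto simp: finite_subspaces_between subspaces_meeting_def intro: finite_subset[OF _ finite_Esub])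
  then have "real (card {U \<in> Esub r. dI U c = d}) = (\<Sum>D\<in>?Ds. real (card (subspaces_meeting r c D)))"
    by simp
  also have "\<dots> = (\<Sum>D\<in>?Ds. real CARD('a) ^ (d\<^sup>2) * gauss_binom CARD('a) (CARD('n) - r) d)"
    by (rule sum.cong[OF refl], rule card_subspaces_meeting[OF c _ _ _ assms(2,3)])
      (auto simp: subspaces_between_def)
  also have "\<dots> = real (card ?Ds) * (real CARD('a) ^ (d\<^sup>2) * gauss_binom CARD('a) (CARD('n) - r) d)"
    by simp
  also have "real (card ?Ds) = gauss_binom CARD('a) r d"
    using card_subspaces_between[of "{0}" c "r - d"] sc vec.subspace_0[OF sc(1)] \<open>d \<le> r\<close>
      gauss_binom_symmetric[OF card_field_ge_2[where 'a='a] \<open>d \<le> r\<close>]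
    by (simp add: vec.subspace_0)
  finally show ?thesis by (simp add: NC_def mult_ac)
qed

lemma card_dI_ball:
  fixes c :: "('a::{field,finite}^'n) set"
  assumes c: "c \<in> Esub r" and "\<rho> \<le> r" "r + \<rho> \<le> CARD('n)"
  shows "real (card {U \<in> Esub r. dI U c \<le> \<rho>}) = VC CARD('a) CARD('n) r \<rho>"
proof -
  have "{U \<in> Esub r. dI U c \<le> \<rho>} = (\<Union>d\<in>{..\<rho>}. {U \<in> Esub r. dI U c = d})" by auto
  then have "card {U \<in> Esub r. dI U c \<le> \<rho>} = (\<Sum>d\<le>\<rho>. card {U \<in> Esub r. dI U c = d})"
    by (simp only:) (rule card_UN_disjoint, auto intro: finite_subset[OF _ finite_Esub])
  then show ?thesis
    using card_dI_sphere[OF c] assms by (simp add: VC_def)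
qed

section \<open>Intersection numbers of the Grassmann graph\<close>

lemma Int_subspaces_between_closer:
  fixes x :: "('a::{field,finite}^'n) set"
  assumes x: "x \<in> Esub r" and c: "c \<in> Esub r"
    and H: "H \<in> subspaces_between (x \<inter> c) x (r - 1)"
    and y: "y \<in> subspaces_between H (vec.span (H \<union> c)) r"
  shows "x \<inter> y = H"
proof -
  have sx: "vec.subspace x" and sc: "vec.subspace c" using x c by (auto simp: Esub_iff)
  have sH: "vec.subspace H" "H \<subseteq> x" "x \<inter> c \<subseteq> H" using H by (auto simp: subspaces_between_def)
  have "x \<inter> vec.span (H \<union> c) = vec.span (H \<union> (x \<inter> c))"
    by (rule Int_span_Un_modular[OF sH(1) sc sx sH(2)])
  also have "\<dots> = H" using sH by (simp add: Un_absorb2 vec.span_eq_iff[THEN iffD2])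
  finally show ?thesis using y sH(2) by (auto simp: subspaces_between_def)
qed

lemma closer_neighbour_of_subspaces_between:
  fixes x :: "('a::{field,finite}^'n) set"
  assumes x: "x \<in> Esub r" and c: "c \<in> Esub r" and j: "dI x c = j" "1 \<le> j"
    and H: "H \<in> subspaces_between (x \<inter> c) x (r - 1)"
    and y: "y \<in> subspaces_between H (vec.span (H \<union> c)) r"
  shows "y \<in> Esub r" "dI x y = 1" "dI y c = j - 1"
proof -
  have sc: "vec.subspace c" "vec.dim c = r" using c by (auto simp: Esub_iff)
  have jr: "j \<le> r" using dI_le[OF x c] j(1) by simp
  have sH: "vec.subspace H" "H \<subseteq> x" "x \<inter> c \<subseteq> H" "vec.dim H = r - 1"
    using H by (auto simp: subspaces_between_def)
  have sy: "vec.subspace y" "H \<subseteq> y" "y \<subseteq> vec.span (H \<union> c)" "vec.dim y = r"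
    using y by (auto simp: subspaces_between_def)
  show yE: "y \<in> Esub r" using sy by (simp add: Esub_iff)
  show "dI x y = 1"
    using dI_eq_dim_Int[OF x yE] Int_subspaces_between_closer[OF x c H y] sH(4) jr j(2) by simp
  have "H \<inter> c = x \<inter> c" using sH(2,3) by blast
  then have "vec.dim (vec.span (H \<union> c)) = r + j - 1"
    using dim_span_Un_plus_dim_Int[OF sH(1) sc(1)] dim_Int_eq_dI[OF x c] sH(4) sc(2) j jr by simp
  moreover have "vec.span (y \<union> c) = vec.span (H \<union> c)"
    unfolding vec.span_eq
  proof
    show "y \<union> c \<subseteq> vec.span (H \<union> c)" using sy(3) vec.span_superset[of "H \<union> c"] by blast
    show "H \<union> c \<subseteq> vec.span (y \<union> c)" using sy(2) vec.span_superset[of "y \<union> c"] by blast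
  qed
  ultimately have "vec.dim (y \<inter> c) = r - j + 1"
    using dim_span_Un_plus_dim_Int[OF sy(1) sc(1)] sy(4) sc(2) jr j(2) by simp
  then show "dI y c = j - 1" using dI_eq_dim_Int[OF yE c] jr j(2) by simp
qed

lemma subspaces_between_of_closer_neighbour:
  fixes x :: "('a::{field,finite}^'n) set"
  assumes x: "x \<in> Esub r" and c: "c \<in> Esub r" and j: "dI x c = j" "1 \<le> j"
    and y: "y \<in> Esub r" "dI x y = 1" "dI y c = j - 1"
  shows "x \<inter> y \<in> subspaces_between (x \<inter> c) x (r - 1)"
    and "y \<in> subspaces_between (x \<inter> y) (vec.span ((x \<inter> y) \<union> c)) r"
proof -
  let ?H = "x \<inter> y"
  have sx: "vec.subspace x" and sy: "vec.subspace y" "vec.dim y = r" and sc: "vec.subspace c"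
    using x y c by (auto simp: Esub_iff)
  have jr: "j \<le> r" using dI_le[OF x c] j(1) by simp
  have sH: "vec.subspace ?H" using sx sy vec.subspace_inter by blast
  have dH: "vec.dim ?H = r - 1" using dim_Int_eq_dI[OF x y(1)] y(2) by simp
  have syc: "vec.subspace (y \<inter> c)" using sy sc vec.subspace_inter by blast
  have dyc: "vec.dim (y \<inter> c) = r - j + 1" using dim_Int_eq_dI[OF y(1) c] y(3) jr j(2) by simp
  have sub: "vec.span (?H \<union> (y \<inter> c)) \<subseteq> y" using sy(1) by (intro vec.span_minimal) auto
  have sum: "vec.dim (vec.span (?H \<union> (y \<inter> c))) + vec.dim (?H \<inter> (y \<inter> c)) = (r - 1) + (r - j + 1)"
    using dim_span_Un_plus_dim_Int[OF sH syc] dH dyc by simp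
  have "?H \<inter> (y \<inter> c) = x \<inter> c"
  proof (rule vec.subspace_dim_equal)
    show "vec.dim (x \<inter> c) \<le> vec.dim (?H \<inter> (y \<inter> c))"
      using sum vec.dim_subset[OF sub] sy(2) dim_Int_eq_dI[OF x c] j jr by simp
  qed (use sH syc sx sc vec.subspace_inter in auto)
  then show "?H \<in> subspaces_between (x \<inter> c) x (r - 1)"
    using sH dH by (auto simp: subspaces_between_def)
  have "vec.dim (vec.span (?H \<union> (y \<inter> c))) = r"
    using sum \<open>?H \<inter> (y \<inter> c) = x \<inter> c\<close> dim_Int_eq_dI[OF x c] j jr by simp
  then have "vec.span (?H \<union> (y \<inter> c)) = y"
    using vec.subspace_dim_equal[OF vec.subspace_span sy(1) sub] sy(2) by simp
  then have "y \<subseteq> vec.span (?H \<union> c)" using vec.span_mono[of "?H \<union> (y \<inter> c)" "?H \<union> c"] by blast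
  then show "y \<in> subspaces_between ?H (vec.span (?H \<union> c)) r"
    using sy by (auto simp: subspaces_between_def)
qed

lemma closer_neighbours_eq_UN:
  fixes x :: "('a::{field,finite}^'n) set"
  assumes x: "x \<in> Esub r" and c: "c \<in> Esub r" and j: "dI x c = j" "1 \<le> j"
  shows "{y \<in> Esub r. dI x y = 1 \<and> dI y c = j - 1}
    = (\<Union>H\<in>subspaces_between (x \<inter> c) x (r - 1). subspaces_between H (vec.span (H \<union> c)) r)"
  (is "_ = (\<Union>H\<in>?Hs. ?G H)")
proof (intro subset_antisym subsetI)
  fix y assume "y \<in> {y \<in> Esub r. dI x y = 1 \<and> dI y c = j - 1}"
  then have "y \<in> Esub r" "dI x y = 1" "dI y c = j - 1" by simp_all
  from subspaces_between_of_closer_neighbour[OF x c j this]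
  show "y \<in> (\<Union>H\<in>?Hs. ?G H)" by blast
next
  fix y assume "y \<in> (\<Union>H\<in>?Hs. ?G H)"
  then obtain H where "H \<in> ?Hs" "y \<in> ?G H" by blast
  from closer_neighbour_of_subspaces_between[OF x c j this]
  show "y \<in> {y \<in> Esub r. dI x y = 1 \<and> dI y c = j - 1}" by simp
qed

lemma card_closer_neighbours:
  fixes x :: "('a::{field,finite}^'n) set"
  assumes x: "x \<in> Esub r" and c: "c \<in> Esub r" and j: "dI x c = j" "1 \<le> j"
  shows "real (card {y \<in> Esub r. dI x y = 1 \<and> dI y c = j - 1}) = cC CARD('a) j"
proof -
  let ?Hs = "subspaces_between (x \<inter> c) x (r - 1)"
    and ?G = "\<lambda>H. subspaces_between H (vec.span (H \<union> c)) r"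
  have sx: "vec.subspace x" "vec.dim x = r" and sc: "vec.subspace c" using x c by (auto simp: Esub_iff)
  have jr: "j \<le> r" using dI_le[OF x c] j(1) by simp
  have dxc: "vec.dim (x \<inter> c) = r - j" using dim_Int_eq_dI[OF x c] j(1) by simp
  have "card {y \<in> Esub r. dI x y = 1 \<and> dI y c = j - 1} = (\<Sum>H\<in>?Hs. card (?G H))"
    unfolding closer_neighbours_eq_UN[OF x c j] using Int_subspaces_between_closer[OF x c]
    by (simp add: card_UN_fibres[where f="\<lambda>y. x \<inter> y"] finite_subspaces_between)
  moreover have "real (card (?G H)) = gauss_binom CARD('a) j 1" if H: "H \<in> ?Hs" for H
  proof -
    have sH: "vec.subspace H" "H \<subseteq> x" "x \<inter> c \<subseteq> H" "vec.dim H = r - 1"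
      using H by (auto simp: subspaces_between_def)
    have "H \<inter> c = x \<inter> c" using sH by blast
    then have dHc: "vec.dim (vec.span (H \<union> c)) = r + j - 1"
      using dim_span_Un_plus_dim_Int[OF sH(1) sc] sH(4) dxc c jr j(2) by (simp add: Esub_iff)
    have "real (card (subspaces_between H (vec.span (H \<union> c)) (vec.dim H + 1)))
        = gauss_binom CARD('a) (vec.dim (vec.span (H \<union> c)) - vec.dim H) 1"
      by (rule card_subspaces_between)
        (use sH dHc jr j(2) in \<open>auto simp: vec.subspace_span intro: vec.span_base\<close>)
    then show ?thesis using sH(4) dHc jr j(2) by simp
  qed
  moreover have "real (card ?Hs) = gauss_binom CARD('a) j 1"
  proof -
    have "real (card (subspaces_between (x \<inter> c) x (vec.dim (x \<inter> c) + (j - 1))))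
        = gauss_binom CARD('a) (vec.dim x - vec.dim (x \<inter> c)) (j - 1)"
      by (rule card_subspaces_between) (use dxc sx sc jr j(2) vec.subspace_inter in auto)
    then show ?thesis
      using dxc sx jr j(2) gauss_binom_symmetric[OF card_field_ge_2[where 'a='a], of 1 j] by simp
  qed
  ultimately show ?thesis by (simp add: cC_def power2_eq_square)
qed

lemma span_insert_eq_of_hyperplane:
  fixes H :: "('a::{field,finite}^'n) set"
  assumes "vec.subspace H" "vec.subspace y" "H \<subseteq> y" "vec.dim y = vec.dim H + 1"
    and "z \<in> y" "z \<notin> H"
  shows "vec.span (insert z H) = y"
proof (rule vec.subspace_dim_equal)
  show "vec.span (insert z H) \<subseteq> y" using assms by (intro vec.span_minimal) auto
  show "vec.dim y \<le> vec.dim (vec.span (insert z H))"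
    using assms by (simp add: vec.dim_insert vec.span_eq_iff[THEN iffD2])
qed (use assms vec.subspace_span in auto)

lemma Int_subspaces_between_farther:
  fixes x :: "('a::{field,finite}^'n) set"
  assumes x: "x \<in> Esub r" and c: "c \<in> Esub r"
    and H: "H \<in> subspaces_between {0} x (r - 1)"
    and y: "y \<in> subspaces_between H UNIV r - subspaces_between H (vec.span (x \<union> c)) r"
  shows "x \<inter> y = H"
proof -
  have sx: "vec.subspace x" "vec.dim x = r" using x by (auto simp: Esub_iff)
  have sH: "vec.subspace H" "H \<subseteq> x" "vec.dim H = r - 1" using H by (auto simp: subspaces_between_def)
  have sy: "vec.subspace y" "H \<subseteq> y" "vec.dim y = r" "\<not> y \<subseteq> vec.span (x \<union> c)"
    using y by (auto simp: subspaces_between_def)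
  have sxy: "vec.subspace (x \<inter> y)" using sx sy vec.subspace_inter by blast
  have "\<not> x \<subseteq> y"
  proof
    assume "x \<subseteq> y"
    then have "x = y" using vec.subspace_dim_equal[OF sx(1) sy(1)] sx(2) sy(3) by simp
    then show False using sy(4) vec.span_superset[of "x \<union> c"] by auto
  qed
  have "vec.dim (x \<inter> y) \<noteq> r"
  proof
    assume "vec.dim (x \<inter> y) = r"
    then have "x \<inter> y = x" using vec.subspace_dim_equal[OF sxy sx(1)] sx(2) by simp
    with \<open>\<not> x \<subseteq> y\<close> show False by blast
  qed
  then have "vec.dim (x \<inter> y) \<le> vec.dim H" using dim_Int_le[of x y] sx sH by simp
  moreover have "H \<subseteq> x \<inter> y" using sH(2) sy(2) by blast
  ultimately show ?thesis using vec.subspace_dim_equal[OF sH(1) sxy] by simp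
qed

lemma farther_neighbour_of_subspaces_between:
  fixes x :: "('a::{field,finite}^'n) set"
  assumes x: "x \<in> Esub r" and c: "c \<in> Esub r" and j: "dI x c = j" "j < r"
    and H: "H \<in> subspaces_between {0} x (r - 1) - subspaces_between (x \<inter> c) x (r - 1)"
    and y: "y \<in> subspaces_between H UNIV r - subspaces_between H (vec.span (x \<union> c)) r"
  shows "y \<in> Esub r" "dI x y = 1" "dI y c = j + 1"
proof -
  have sx: "vec.subspace x" "vec.dim x = r" and sc: "vec.subspace c" using x c by (auto simp: Esub_iff)
  have sH: "vec.subspace H" "H \<subseteq> x" "\<not> x \<inter> c \<subseteq> H" "vec.dim H = r - 1"
    using H by (auto simp: subspaces_between_def)
  have sy: "vec.subspace y" "H \<subseteq> y" "vec.dim y = r" "\<not> y \<subseteq> vec.span (x \<union> c)"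
    using y by (auto simp: subspaces_between_def)
  have H0: "H \<in> subspaces_between {0} x (r - 1)" using H by blast
  show yE: "y \<in> Esub r" using sy by (simp add: Esub_iff)
  show "dI x y = 1"
    using dI_eq_dim_Int[OF x yE] Int_subspaces_between_farther[OF x c H0 y] sH(4) j(2) by simp
  have "y \<inter> c \<subseteq> H"
  proof
    fix z assume z: "z \<in> y \<inter> c"
    show "z \<in> H"
    proof (rule ccontr)
      assume "z \<notin> H"
      then have "vec.span (insert z H) = y"
        using span_insert_eq_of_hyperplane[OF sH(1) sy(1,2)] z sy(3) sH(4) j(2) by simp
      moreover have "vec.span (insert z H) \<subseteq> vec.span (x \<union> c)"
        using z sH(2) by (intro vec.span_mono) auto
      ultimately show False using sy(4) by simp
    qed
  qed
  then have yc: "y \<inter> c = H \<inter> (x \<inter> c)" using sy(2) sH(2) by blast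
  obtain z where z: "z \<in> x \<inter> c" "z \<notin> H" using sH(3) by blast
  have "x = vec.span (insert z H)"
    using span_insert_eq_of_hyperplane[OF sH(1) sx(1) sH(2)] z sx(2) sH(4) j(2) by simp
  also have "\<dots> \<subseteq> vec.span (H \<union> (x \<inter> c))" using z by (intro vec.span_mono) auto
  finally have "vec.dim (vec.span (H \<union> (x \<inter> c))) = r"
    using vec.dim_subset vec.dim_subset[OF vec.span_minimal[of "H \<union> (x \<inter> c)" x]] sH(2) sx
    by (metis Int_lower1 le_antisym le_sup_iff)
  then have "vec.dim (y \<inter> c) = r - j - 1"
    using yc dim_span_Un_plus_dim_Int[OF sH(1) vec.subspace_inter[OF sx(1) sc]] sH(4)
      dim_Int_eq_dI[OF x c] j by simp
  then show "dI y c = j + 1" using dI_eq_dim_Int[OF yE c] j by simp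
qed

lemma subspaces_between_of_farther_neighbour:
  fixes x :: "('a::{field,finite}^'n) set"
  assumes x: "x \<in> Esub r" and c: "c \<in> Esub r" and j: "dI x c = j"
    and y: "y \<in> Esub r" "dI x y = 1" "dI y c = j + 1"
  shows "x \<inter> y \<in> subspaces_between {0} x (r - 1) - subspaces_between (x \<inter> c) x (r - 1)"
    and "y \<in> subspaces_between (x \<inter> y) UNIV r - subspaces_between (x \<inter> y) (vec.span (x \<union> c)) r"
proof -
  have sx: "vec.subspace x" and sy: "vec.subspace y" "vec.dim y = r" and sc: "vec.subspace c" "vec.dim c = r"
    using x y c by (auto simp: Esub_iff)
  have dyc: "vec.dim (y \<inter> c) = r - (j + 1)" using dim_Int_eq_dI[OF y(1) c] y(3) by simp
  have "\<not> x \<inter> c \<subseteq> x \<inter> y"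
  proof
    assume "x \<inter> c \<subseteq> x \<inter> y"
    then have "vec.dim (x \<inter> c) \<le> vec.dim (y \<inter> c)" by (intro vec.dim_subset) blast
    then show False using dyc dim_Int_eq_dI[OF x c] j y(3) dI_le[OF y(1) c] by simp
  qed
  then show "x \<inter> y \<in> subspaces_between {0} x (r - 1) - subspaces_between (x \<inter> c) x (r - 1)"
    using dim_Int_eq_dI[OF x y(1)] y(2) sx sy vec.subspace_inter[OF sx sy(1)]
    by (auto simp: subspaces_between_def vec.subspace_0)
  have "\<not> y \<subseteq> vec.span (x \<union> c)"
  proof
    assume "y \<subseteq> vec.span (x \<union> c)"
    then have "vec.span (y \<union> c) \<subseteq> vec.span (x \<union> c)"
      using vec.span_superset[of "x \<union> c"] by (intro vec.span_minimal) (auto simp: vec.subspace_span)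
    then have "vec.dim (vec.span (y \<union> c)) \<le> vec.dim (vec.span (x \<union> c))" by (rule vec.dim_subset)
    moreover have "vec.dim (vec.span (x \<union> c)) = r + j"
      using dim_span_Un_plus_dim_Int[OF sx sc(1)] dim_Int_eq_dI[OF x c] x sc(2) j dI_le[OF x c]
      by (simp add: Esub_iff)
    moreover have "vec.dim (vec.span (y \<union> c)) = r + j + 1"
      using dim_span_Un_plus_dim_Int[OF sy(1) sc(1)] dyc sy(2) sc(2) y(3) dI_le[OF y(1) c] by simp
    ultimately show False by simp
  qed
  then show "y \<in> subspaces_between (x \<inter> y) UNIV r - subspaces_between (x \<inter> y) (vec.span (x \<union> c)) r"
    using sy by (auto simp: subspaces_between_def)
qed

lemma farther_neighbours_eq_UN:
  fixes x :: "('a::{field,finite}^'n) set"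
  assumes x: "x \<in> Esub r" and c: "c \<in> Esub r" and j: "dI x c = j" "j < r"
  shows "{y \<in> Esub r. dI x y = 1 \<and> dI y c = j + 1}
    = (\<Union>H\<in>subspaces_between {0} x (r - 1) - subspaces_between (x \<inter> c) x (r - 1).
        subspaces_between H UNIV r - subspaces_between H (vec.span (x \<union> c)) r)"
  (is "_ = (\<Union>H\<in>?Hs. ?G H)")
proof (intro subset_antisym subsetI)
  fix y assume "y \<in> {y \<in> Esub r. dI x y = 1 \<and> dI y c = j + 1}"
  then have "y \<in> Esub r" "dI x y = 1" "dI y c = j + 1" by simp_all
  from subspaces_between_of_farther_neighbour[OF x c j(1) this]
  show "y \<in> (\<Union>H\<in>?Hs. ?G H)" by blast
next
  fix y assume "y \<in> (\<Union>H\<in>?Hs. ?G H)"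
  then obtain H where "H \<in> ?Hs" "y \<in> ?G H" by blast
  from farther_neighbour_of_subspaces_between[OF x c j this]
  show "y \<in> {y \<in> Esub r. dI x y = 1 \<and> dI y c = j + 1}" by simp
qed

lemma of_nat_card_Diff_subset:
  assumes "finite A" "B \<subseteq> A"
  shows "of_nat (card (A - B)) = (of_nat (card A) - of_nat (card B) :: 'a::ring_1)"
  using assms by (simp add: card_Diff_subset finite_subset of_nat_diff card_mono)

lemma card_hyperplanes_not_containing:
  fixes x :: "('a::{field,finite}^'n) set"
  assumes x: "x \<in> Esub r" and c: "c \<in> Esub r" and j: "dI x c = j" "j < r"
  shows "real (card (subspaces_between {0} x (r - 1) - subspaces_between (x \<inter> c) x (r - 1)))
    = real CARD('a) ^ j * gauss_binom CARD('a) (r - j) 1"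
proof -
  have q: "CARD('a) \<ge> 2" by (rule card_field_ge_2)
  have sx: "vec.subspace x" "vec.dim x = r" and sc: "vec.subspace c" using x c by (auto simp: Esub_iff)
  have dxc: "vec.dim (x \<inter> c) = r - j" using dim_Int_eq_dI[OF x c] j(1) by simp
  have all: "real (card (subspaces_between {0} x (r - 1))) = gauss_binom CARD('a) r 1"
    using card_subspaces_between[of "{0}" x "r - 1"] sx vec.subspace_0[OF sx(1)] j(2)
      gauss_binom_symmetric[OF q, of 1 r]
    by (simp add: vec.subspace_0)
  have containing: "real (card (subspaces_between (x \<inter> c) x (r - 1))) = gauss_binom CARD('a) j 1"
  proof (cases "j = 0")
    case True
    then have "x \<inter> c = x"
      using dxc sx vec.subspace_dim_equal[OF vec.subspace_inter[OF sx(1) sc] sx(1)] by auto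
    then have "subspaces_between (x \<inter> c) x (r - 1) = {}"
      using sx j(2) by (auto simp: subspaces_between_def)
    then show ?thesis using True by (simp add: gauss_binom_def)
  next
    case False
    have "real (card (subspaces_between (x \<inter> c) x (vec.dim (x \<inter> c) + (j - 1))))
        = gauss_binom CARD('a) (vec.dim x - vec.dim (x \<inter> c)) (j - 1)"
      by (rule card_subspaces_between)
        (use dxc sx sc j vec.subspace_inter[OF sx(1) sc] in auto)
    then show ?thesis
      using False dxc sx j gauss_binom_symmetric[OF q, of 1 j] by simp
  qed
  have "subspaces_between (x \<inter> c) x (r - 1) \<subseteq> subspaces_between {0} x (r - 1)"
    by (auto simp: subspaces_between_def vec.subspace_0)
  then have "real (card (subspaces_between {0} x (r - 1) - subspaces_between (x \<inter> c) x (r - 1)))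
      = gauss_binom CARD('a) r 1 - gauss_binom CARD('a) j 1"
    using all containing by (simp add: of_nat_card_Diff_subset finite_subspaces_between)
  then show ?thesis using gauss_binom_one_diff[of j r] j(2) by simp
qed

lemma card_subspaces_between_outside:
  fixes H :: "('a::{field,finite}^'n) set"
  assumes H: "vec.subspace H" "vec.dim H = r - 1" and X: "vec.subspace X" "H \<subseteq> X" "vec.dim X = r + j"
    and "1 \<le> r" "2 * r \<le> CARD('n)" "j < r"
  shows "real (card (subspaces_between H UNIV r - subspaces_between H X r))
    = real CARD('a) ^ (j + 1) * gauss_binom CARD('a) (CARD('n) - r - j) 1"
proof -
  have all: "real (card (subspaces_between H UNIV (vec.dim H + 1)))
      = gauss_binom CARD('a) (vec.dim (UNIV :: ('a^'n) set) - vec.dim H) 1"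
    by (rule card_subspaces_between) (use H assms(6,7) in \<open>auto simp: card_cart_basis\<close>)
  have inside: "real (card (subspaces_between H X (vec.dim H + 1)))
      = gauss_binom CARD('a) (vec.dim X - vec.dim H) 1"
    by (rule card_subspaces_between[OF H(1) X(1,2)]) (use H X assms(6) in simp)
  have "subspaces_between H X r \<subseteq> subspaces_between H UNIV r"
    by (auto simp: subspaces_between_def)
  then have "real (card (subspaces_between H UNIV r - subspaces_between H X r))
      = gauss_binom CARD('a) (CARD('n) - r + 1) 1 - gauss_binom CARD('a) (j + 1) 1"
    using all inside H X assms(6,7) by (simp add: of_nat_card_Diff_subset finite_subspaces_between card_cart_basis Suc_diff_le)
  then show ?thesis using gauss_binom_one_diff[of "j + 1" "CARD('n) - r + 1"] assms(7,8) by simp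
qed

lemma card_farther_neighbours:
  fixes x :: "('a::{field,finite}^'n) set"
  assumes x: "x \<in> Esub r" and c: "c \<in> Esub r" and j: "dI x c = j" "j < r" and n: "2 * r \<le> CARD('n)"
  shows "real (card {y \<in> Esub r. dI x y = 1 \<and> dI y c = j + 1}) = bC CARD('a) CARD('n) r j"
proof -
  let ?X = "vec.span (x \<union> c)"
  let ?Hs = "subspaces_between {0} x (r - 1) - subspaces_between (x \<inter> c) x (r - 1)"
    and ?G = "\<lambda>H. subspaces_between H UNIV r - subspaces_between H ?X r"
  have sx: "vec.subspace x" "vec.dim x = r" and sc: "vec.subspace c" "vec.dim c = r"
    using x c by (auto simp: Esub_iff)
  have dX: "vec.dim ?X = r + j"
    using dim_span_Un_plus_dim_Int[OF sx(1) sc(1)] dim_Int_eq_dI[OF x c] sx(2) sc(2) j by simp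
  have "card {y \<in> Esub r. dI x y = 1 \<and> dI y c = j + 1} = (\<Sum>H\<in>?Hs. card (?G H))"
    unfolding farther_neighbours_eq_UN[OF x c j]
  proof (rule card_UN_fibres[where f="\<lambda>y. x \<inter> y"])
    fix H y assume "H \<in> ?Hs" "y \<in> ?G H"
    then show "x \<inter> y = H" using Int_subspaces_between_farther[OF x c] by blast
  qed (simp_all add: finite_subspaces_between)
  moreover have "real (card (?G H)) = real CARD('a) ^ (j + 1) * gauss_binom CARD('a) (CARD('n) - r - j) 1"
    if "H \<in> ?Hs" for H
    using that sx vec.span_superset[of "x \<union> c"] dX j(2) n
    by (intro card_subspaces_between_outside) (auto simp: subspaces_between_def vec.subspace_span)
  ultimately have "real (card {y \<in> Esub r. dI x y = 1 \<and> dI y c = j + 1})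
      = real (card ?Hs) * (real CARD('a) ^ (j + 1) * gauss_binom CARD('a) (CARD('n) - r - j) 1)"
    by simp
  also have "\<dots> = bC CARD('a) CARD('n) r j"
  proof -
    have "real CARD('a) ^ (2 * j + 1) = real CARD('a) ^ j * real CARD('a) ^ (j + 1)"
      by (simp add: mult_2 flip: power_add)
    then show ?thesis
      using card_hyperplanes_not_containing[OF x c j] by (simp add: bC_def mult_ac)
  qed
  finally show ?thesis .
qed

section \<open>Excess counting for coverings\<close>

lemma sum_card_filter_swap:
  assumes "finite Y" "finite C"
  shows "(\<Sum>y\<in>Y. card {c\<in>C. P y c}) = (\<Sum>c\<in>C. card {y\<in>Y. P y c})"
proof -
  have "(\<Sum>y\<in>Y. card {c\<in>C. P y c}) = (\<Sum>y\<in>Y. \<Sum>c\<in>C. of_bool (P y c))"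
    using assms by (simp add: Int_def)
  also have "\<dots> = (\<Sum>c\<in>C. \<Sum>y\<in>Y. of_bool (P y c))" by (rule sum.swap)
  also have "\<dots> = (\<Sum>c\<in>C. card {y\<in>Y. P y c})"
    using assms by (simp add: Int_def)
  finally show ?thesis .
qed

locale regular_covering =
  fixes X :: "'x set" and d :: "'x \<Rightarrow> 'x \<Rightarrow> nat" and C :: "'x set" and \<rho> :: nat
    and N1 b_rho c_rho c_Suc_rho :: real
  assumes finite_X: "finite X" and C_subset: "C \<subseteq> X"
    and sym: "\<And>x y. x \<in> X \<Longrightarrow> y \<in> X \<Longrightarrow> d x y = d y x"
    and triangle: "\<And>x y z. x \<in> X \<Longrightarrow> y \<in> X \<Longrightarrow> z \<in> X \<Longrightarrow> d x z \<le> d x y + d y z"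
    and covering: "\<And>x. x \<in> X \<Longrightarrow> \<exists>c\<in>C. d x c \<le> \<rho>"
    and rho_pos: "\<rho> \<ge> 1"
    and card_neighbours: "\<And>x. x \<in> X \<Longrightarrow> real (card {y\<in>X. d x y = 1}) = N1"
    and card_farther: "\<And>x c. x \<in> X \<Longrightarrow> c \<in> X \<Longrightarrow> d x c = \<rho> \<Longrightarrow>
      real (card {y\<in>X. d x y = 1 \<and> d y c = \<rho> + 1}) = b_rho"
    and card_closer: "\<And>x c. x \<in> X \<Longrightarrow> c \<in> X \<Longrightarrow> d x c = \<rho> \<Longrightarrow>
      real (card {y\<in>X. d x y = 1 \<and> d y c = \<rho> - 1}) = c_rho"
    and card_closer_Suc: "\<And>x c. x \<in> X \<Longrightarrow> c \<in> X \<Longrightarrow> d x c = \<rho> + 1 \<Longrightarrow>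
      real (card {y\<in>X. d x y = 1 \<and> d y c = \<rho>}) = c_Suc_rho"
    and c_Suc_rho_pos: "c_Suc_rho > 0"
    and c_rho_le_N1: "c_rho \<le> N1"
begin

definition "neighbours x = {y\<in>X. d x y = 1}"
definition "cover_count y = card {c\<in>C. d y c \<le> \<rho>}"
definition "excess y = real (cover_count y) - 1"
definition "boundary_count y = card {c\<in>C. d y c = \<rho>}"

definition "tight = {x\<in>X. cover_count x = 1 \<and> boundary_count x = 1}"

definition "eps = of_int \<lceil>b_rho / c_Suc_rho\<rceil> * c_Suc_rho - b_rho"

lemma finite_C: "finite C"
  by (rule finite_subset[OF C_subset finite_X])

lemma finite_neighbours: "finite (neighbours x)"
  using finite_X by (simp add: neighbours_def)

lemma tight_subset: "tight \<subseteq> X"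
  unfolding tight_def by blast

lemma cover_count_pos:
  assumes "x \<in> X" shows "cover_count x \<ge> 1"
proof -
  have "{c\<in>C. d x c \<le> \<rho>} \<noteq> {}" using covering[OF assms] by blast
  then have "cover_count x \<noteq> 0"
    using finite_C by (simp add: cover_count_def)
  then show ?thesis by simp
qed

lemma excess_nonneg: "x \<in> X \<Longrightarrow> excess x \<ge> 0"
  using cover_count_pos by (simp add: excess_def)

lemma eps_nonneg: "eps \<ge> 0"
proof -
  have "b_rho = b_rho / c_Suc_rho * c_Suc_rho" using c_Suc_rho_pos by simp
  also have "\<dots> \<le> of_int \<lceil>b_rho / c_Suc_rho\<rceil> * c_Suc_rho"
    using c_Suc_rho_pos by (intro mult_right_mono) auto
  finally show ?thesis by (simp add: eps_def)
qed

lemma tight_unique_codeword: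
  assumes "x \<in> tight"
  obtains c0 where "c0 \<in> C" "d x c0 = \<rho>" "\<And>c. c \<in> C \<Longrightarrow> d x c \<le> \<rho> \<Longrightarrow> c = c0"
proof -
  have card1: "card {c\<in>C. d x c = \<rho>} = 1" "card {c\<in>C. d x c \<le> \<rho>} = 1"
    using assms by (simp_all add: tight_def boundary_count_def cover_count_def)
  obtain c0 where c0: "{c\<in>C. d x c = \<rho>} = {c0}"
    using card1(1) by (rule card_1_singletonE)
  obtain c1 where c1: "{c\<in>C. d x c \<le> \<rho>} = {c1}"
    using card1(2) by (rule card_1_singletonE)
  have "c0 \<in> {c\<in>C. d x c = \<rho>}" using c0 by simp
  then have c0C: "c0 \<in> C" and dc0: "d x c0 = \<rho>" by simp_all
  show thesis
  proof (rule that[OF c0C dc0])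
    fix c assume "c \<in> C" "d x c \<le> \<rho>"
    then have "c \<in> {c1}" "c0 \<in> {c1}" using c0C dc0 unfolding c1[symmetric] by simp_all
    then show "c = c0" by simp
  qed
qed

lemma card_neighbours_within_near:
  assumes x: "x \<in> X" and c: "c \<in> X" "d x c = \<rho>"
  shows "real (card {y\<in>neighbours x. d y c \<le> \<rho>}) = N1 - b_rho"
proof -
  let ?A = "{y\<in>neighbours x. d y c \<le> \<rho>}" and ?B = "{y\<in>X. d x y = 1 \<and> d y c = \<rho> + 1}"
  have "d y c \<le> \<rho> + 1" if "y \<in> X" "d x y = 1" for y
    using triangle[of y x c] sym[of y x] that x c by simp
  then have "{y\<in>X. d x y = 1} = ?A \<union> ?B"
    unfolding neighbours_def by force
  moreover have "card (?A \<union> ?B) = card ?A + card ?B"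
    using finite_neighbours finite_X by (intro card_Un_disjoint) auto
  ultimately have "real (card {y\<in>X. d x y = 1}) = real (card ?A) + real (card ?B)"
    by (simp only: of_nat_add)
  then show ?thesis
    using card_neighbours[OF x] card_farther[OF x c] by simp
qed

lemma card_neighbours_within_far:
  assumes x: "x \<in> X" and c: "c \<in> X" "d x c = \<rho> + 1"
  shows "real (card {y\<in>neighbours x. d y c \<le> \<rho>}) = c_Suc_rho"
proof -
  have "d y c \<ge> \<rho>" if "y \<in> X" "d x y = 1" for y
    using triangle[of x y c] that x c by simp
  then have "{y\<in>neighbours x. d y c \<le> \<rho>} = {y\<in>X. d x y = 1 \<and> d y c = \<rho>}"
    unfolding neighbours_def by force
  then show ?thesis using card_closer_Suc[OF x c] by simp
qed

lemma sum_neighbours_within_far: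
  assumes x: "x \<in> X"
  shows "(\<Sum>c\<in>{c\<in>C. d x c = \<rho> + 1}. real (card {y\<in>neighbours x. d y c \<le> \<rho>}))
    = real (card {c\<in>C. d x c = \<rho> + 1}) * c_Suc_rho"
proof -
  have "(\<Sum>c\<in>{c\<in>C. d x c = \<rho> + 1}. real (card {y\<in>neighbours x. d y c \<le> \<rho>}))
      = (\<Sum>c\<in>{c\<in>C. d x c = \<rho> + 1}. c_Suc_rho)"
    using card_neighbours_within_far[OF x] C_subset by (intro sum.cong) auto
  then show ?thesis by simp
qed

text \<open>The \<open>b_rho\<close> neighbours of a tight point that move away from its codeword must be
  covered by codewords at distance \<open>\<rho> + 1\<close>, each of which covers \<open>c_Suc_rho\<close> of them.\<close>
lemma b_rho_le_far_codewords:
  assumes x: "x \<in> tight" and c0: "c0 \<in> C" "d x c0 = \<rho>"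
    and unique: "\<And>c. c \<in> C \<Longrightarrow> d x c \<le> \<rho> \<Longrightarrow> c = c0"
  shows "b_rho \<le> real (card {c\<in>C. d x c = \<rho> + 1}) * c_Suc_rho"
proof -
  let ?M = "{c\<in>C. d x c = \<rho> + 1}"
  have xX: "x \<in> X" and c0X: "c0 \<in> X" using x c0 C_subset tight_subset by auto
  have cover: "{y\<in>X. d x y = 1 \<and> d y c0 = \<rho> + 1} \<subseteq> (\<Union>c\<in>?M. {y\<in>neighbours x. d y c \<le> \<rho>})"
  proof
    fix y assume y: "y \<in> {y\<in>X. d x y = 1 \<and> d y c0 = \<rho> + 1}"
    then obtain c where c: "c \<in> C" "d y c \<le> \<rho>" using covering by blast
    then have "c \<noteq> c0" using y by auto
    moreover have "d x c \<le> \<rho> + 1" using triangle[OF xX, of y c] y c C_subset by auto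
    ultimately have "c \<in> ?M" using unique c by fastforce
    then show "y \<in> (\<Union>c\<in>?M. {y\<in>neighbours x. d y c \<le> \<rho>})"
      using y c by (auto simp: neighbours_def)
  qed
  have "b_rho = real (card {y\<in>X. d x y = 1 \<and> d y c0 = \<rho> + 1})"
    using card_farther[OF xX c0X c0(2)] by simp
  also have "\<dots> \<le> real (card (\<Union>c\<in>?M. {y\<in>neighbours x. d y c \<le> \<rho>}))"
    using cover finite_C finite_neighbours by (intro of_nat_mono card_mono) auto
  also have "\<dots> \<le> (\<Sum>c\<in>?M. real (card {y\<in>neighbours x. d y c \<le> \<rho>}))"
    using card_UN_le[of ?M "\<lambda>c. {y\<in>neighbours x. d y c \<le> \<rho>}"] finite_C
    by (simp flip: of_nat_sum)
  also have "\<dots> = real (card ?M) * c_Suc_rho"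
    by (rule sum_neighbours_within_far[OF xX])
  finally show ?thesis .
qed

lemma eps_le_excess_neighbours:
  assumes x: "x \<in> tight"
  shows "eps \<le> (\<Sum>y\<in>neighbours x. excess y)"
proof -
  obtain c0 where c0: "c0 \<in> C" "d x c0 = \<rho>" and unique: "\<And>c. c \<in> C \<Longrightarrow> d x c \<le> \<rho> \<Longrightarrow> c = c0"
    using tight_unique_codeword[OF x] by blast
  have xX: "x \<in> X" and c0X: "c0 \<in> X" using x c0 C_subset tight_subset by auto
  let ?M = "{c\<in>C. d x c = \<rho> + 1}"
  let ?f = "\<lambda>c. real (card {y\<in>neighbours x. d y c \<le> \<rho>})"
  have "b_rho / c_Suc_rho \<le> of_int (int (card ?M))"
    using b_rho_le_far_codewords[OF x c0 unique] c_Suc_rho_pos by (simp add: divide_le_eq)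
  then have "\<lceil>b_rho / c_Suc_rho\<rceil> \<le> int (card ?M)"
    by (simp add: ceiling_le_iff)
  then have "of_int \<lceil>b_rho / c_Suc_rho\<rceil> * c_Suc_rho \<le> real (card ?M) * c_Suc_rho"
    using c_Suc_rho_pos by (intro mult_right_mono) (simp_all add: of_int_le_iff[symmetric])
  also have "\<dots> = (\<Sum>c\<in>?M. ?f c)"
    by (rule sum_neighbours_within_far[OF xX, symmetric])
  also have "\<dots> = (\<Sum>c\<in>insert c0 ?M. ?f c) - ?f c0"
    using finite_C c0 by simp
  also have "\<dots> \<le> (\<Sum>c\<in>C. ?f c) - (N1 - b_rho)"
    using card_neighbours_within_near[OF xX c0X c0(2)] c0 finite_C
    by (intro diff_mono sum_mono2) auto
  also have "(\<Sum>c\<in>C. ?f c) = (\<Sum>y\<in>neighbours x. real (cover_count y))"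
    using sum_card_filter_swap[OF finite_neighbours finite_C, where P="\<lambda>y c. d y c \<le> \<rho>"]
    by (simp add: cover_count_def flip: of_nat_sum)
  finally have "N1 + eps \<le> (\<Sum>y\<in>neighbours x. real (cover_count y))"
    by (simp add: eps_def)
  moreover have "(\<Sum>y\<in>neighbours x. excess y) = (\<Sum>y\<in>neighbours x. real (cover_count y)) - N1"
    using card_neighbours[OF xX] by (simp add: excess_def sum_subtractf neighbours_def)
  ultimately show ?thesis by simp
qed

lemma tight_covering_dist:
  assumes "x \<in> tight" "c \<in> C" "d x c \<le> \<rho>"
  shows "d x c = \<rho>"
  using tight_unique_codeword[OF assms(1)] assms(2,3) by metis

lemma card_tight_neighbours_of_boundary:
  assumes y: "y \<in> X" and c: "c \<in> C" "d y c = \<rho>"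
  shows "real (card (neighbours y \<inter> tight)) \<le> N1 - c_rho"
proof -
  let ?Z = "{x\<in>X. d y x = 1 \<and> d x c = \<rho> - 1}"
  have "x \<notin> tight" if "x \<in> ?Z" for x
    using that tight_covering_dist[of x c] c(1) rho_pos by force
  then have "neighbours y \<inter> tight \<subseteq> neighbours y - ?Z" by blast
  moreover have "?Z \<subseteq> neighbours y" by (auto simp: neighbours_def)
  ultimately have "card (neighbours y \<inter> tight) \<le> card (neighbours y) - card ?Z"
    using finite_neighbours by (metis card_Diff_subset card_mono finite_Diff finite_subset)
  moreover have "card ?Z \<le> card (neighbours y)"
    using \<open>?Z \<subseteq> neighbours y\<close> finite_neighbours by (rule card_mono[rotated])
  moreover have "real (card ?Z) = c_rho"
    using card_closer[OF y _ c(2)] c(1) C_subset by auto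
  ultimately show ?thesis
    using card_neighbours[OF y] by (simp add: neighbours_def of_nat_diff)
qed

lemma no_tight_neighbours:
  assumes y: "y \<in> X" and c: "c1 \<in> C" "c2 \<in> C" "c1 \<noteq> c2" "d y c1 < \<rho>" "d y c2 < \<rho>"
  shows "neighbours y \<inter> tight = {}"
proof (rule ccontr)
  assume "neighbours y \<inter> tight \<noteq> {}"
  then obtain x where x: "x \<in> tight" "d y x = 1" "x \<in> X" by (auto simp: neighbours_def)
  have "c1 \<in> X" "c2 \<in> X" using c(1,2) C_subset by auto
  then have "d x c1 \<le> \<rho>" "d x c2 \<le> \<rho>"
    using triangle[OF x(3) y] sym[OF x(3) y] x(2) c(4,5) by fastforce+
  then show False
    using tight_unique_codeword[OF x(1)] c(1-3) by metis
qed

lemma card_tight_neighbours_le: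
  assumes y: "y \<in> X" and two: "cover_count y \<ge> 2"
  shows "real (card (neighbours y \<inter> tight)) \<le> N1 - c_rho"
proof (cases "\<exists>c\<in>C. d y c = \<rho>")
  case True
  then show ?thesis using card_tight_neighbours_of_boundary[OF y] by blast
next
  case False
  let ?S = "{c\<in>C. d y c \<le> \<rho>}"
  have two': "card ?S \<ge> 2" using two by (simp add: cover_count_def)
  then have "?S \<noteq> {}" by (metis card.empty not_numeral_le_zero)
  then obtain c1 where c1: "c1 \<in> ?S" by blast
  have "?S \<noteq> {c1}" using two' by auto
  then obtain c2 where "c2 \<in> ?S" "c2 \<noteq> c1" using c1 by blast
  with c1 False have "c1 \<in> C" "c2 \<in> C" "c1 \<noteq> c2" "d y c1 < \<rho>" "d y c2 < \<rho>"
    by (auto simp: order_le_less)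
  then have "neighbours y \<inter> tight = {}"
    by (rule no_tight_neighbours[OF y])
  then show ?thesis using c_rho_le_N1 by simp
qed

lemma sum_tight_excess_neighbours:
  "(\<Sum>x\<in>tight. \<Sum>y\<in>neighbours x. excess y) = (\<Sum>y\<in>X. excess y * real (card (neighbours y \<inter> tight)))"
proof -
  have finite_tight: "finite tight" by (rule finite_subset[OF tight_subset finite_X])
  have "(\<Sum>x\<in>tight. \<Sum>y\<in>neighbours x. excess y) = (\<Sum>x\<in>tight. \<Sum>y\<in>X. excess y * of_bool (d y x = 1))"
  proof (rule sum.cong[OF refl])
    fix x assume "x \<in> tight"
    then have "neighbours x = X \<inter> {y. d y x = 1}"
      using sym tight_subset unfolding neighbours_def by auto
    then show "(\<Sum>y\<in>neighbours x. excess y) = (\<Sum>y\<in>X. excess y * of_bool (d y x = 1))"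
      using finite_X by simp
  qed
  also have "\<dots> = (\<Sum>y\<in>X. excess y * (\<Sum>x\<in>tight. of_bool (d y x = 1)))"
    by (subst sum.swap) (simp add: sum_distrib_left)
  also have "\<dots> = (\<Sum>y\<in>X. excess y * real (card (neighbours y \<inter> tight)))"
  proof (rule sum.cong[OF refl])
    fix y
    have "tight \<inter> {x. d y x = 1} = neighbours y \<inter> tight"
      using tight_subset unfolding neighbours_def by auto
    then show "excess y * (\<Sum>x\<in>tight. of_bool (d y x = 1)) = excess y * real (card (neighbours y \<inter> tight))"
      using finite_tight by simp
  qed
  finally show ?thesis .
qed

lemma eps_card_tight_le:
  "eps * real (card tight) \<le> (N1 - c_rho) * (\<Sum>y\<in>X. excess y)"
proof -
  have "eps * real (card tight) = (\<Sum>x\<in>tight. eps)" by simp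
  also have "\<dots> \<le> (\<Sum>x\<in>tight. \<Sum>y\<in>neighbours x. excess y)"
    by (rule sum_mono) (rule eps_le_excess_neighbours)
  also have "\<dots> = (\<Sum>y\<in>X. excess y * real (card (neighbours y \<inter> tight)))"
    by (rule sum_tight_excess_neighbours)
  also have "\<dots> \<le> (\<Sum>y\<in>X. excess y * (N1 - c_rho))"
  proof (rule sum_mono)
    fix y assume y: "y \<in> X"
    show "excess y * real (card (neighbours y \<inter> tight)) \<le> excess y * (N1 - c_rho)"
    proof (cases "cover_count y \<ge> 2")
      case True
      then show ?thesis
        using card_tight_neighbours_le[OF y] excess_nonneg[OF y] by (intro mult_left_mono)
    next
      case False
      then have "excess y = 0" using cover_count_pos[OF y] by (simp add: excess_def)
      then show ?thesis by simp
    qed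
  qed
  also have "\<dots> = (N1 - c_rho) * (\<Sum>y\<in>X. excess y)"
    by (simp add: sum_distrib_left mult.commute)
  finally show ?thesis .
qed

lemma boundary_count_le:
  assumes "x \<in> X"
  shows "real (boundary_count x) \<le> of_bool (x \<in> tight) + 2 * excess x"
proof -
  have "boundary_count x \<le> cover_count x"
    unfolding boundary_count_def cover_count_def using finite_C by (intro card_mono) auto
  then show ?thesis
    using cover_count_pos[OF assms] assms by (auto simp: excess_def tight_def)
qed

lemma sum_cover_count:
  assumes "\<And>c. c \<in> C \<Longrightarrow> real (card {y\<in>X. d y c \<le> \<rho>}) = V"
  shows "(\<Sum>y\<in>X. real (cover_count y)) = real (card C) * V"
proof -
  have "(\<Sum>y\<in>X. real (cover_count y)) = (\<Sum>c\<in>C. real (card {y\<in>X. d y c \<le> \<rho>}))"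
    using sum_card_filter_swap[OF finite_X finite_C, where P="\<lambda>y c. d y c \<le> \<rho>"]
    by (simp add: cover_count_def flip: of_nat_sum)
  also have "\<dots> = (\<Sum>c\<in>C. V)"
    using assms by (rule sum.cong[OF refl])
  finally show ?thesis by simp
qed

lemma sum_boundary_count:
  assumes "\<And>c. c \<in> C \<Longrightarrow> real (card {y\<in>X. d y c = \<rho>}) = S"
  shows "(\<Sum>y\<in>X. real (boundary_count y)) = real (card C) * S"
proof -
  have "(\<Sum>y\<in>X. real (boundary_count y)) = (\<Sum>c\<in>C. real (card {y\<in>X. d y c = \<rho>}))"
    using sum_card_filter_swap[OF finite_X finite_C, where P="\<lambda>y c. d y c = \<rho>"]
    by (simp add: boundary_count_def flip: of_nat_sum)
  also have "\<dots> = (\<Sum>c\<in>C. S)"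
    using assms by (rule sum.cong[OF refl])
  finally show ?thesis by simp
qed

lemma sum_boundary_count_le:
  "(\<Sum>x\<in>X. real (boundary_count x)) \<le> real (card tight) + 2 * (\<Sum>x\<in>X. excess x)"
proof -
  have "(\<Sum>x\<in>X. real (boundary_count x)) \<le> (\<Sum>x\<in>X. of_bool (x \<in> tight) + 2 * excess x)"
    by (rule sum_mono) (rule boundary_count_le)
  also have "\<dots> = real (card (X \<inter> tight)) + 2 * (\<Sum>x\<in>X. excess x)"
    using finite_X by (simp add: sum.distrib sum_distrib_left Int_def)
  also have "X \<inter> tight = tight" using tight_subset by blast
  finally show ?thesis .
qed

theorem improved_sphere_covering_bound:
  assumes ball: "\<And>c. c \<in> C \<Longrightarrow> real (card {y\<in>X. d y c \<le> \<rho>}) = V"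
    and sphere: "\<And>c. c \<in> C \<Longrightarrow> real (card {y\<in>X. d y c = \<rho>}) = S"
    and \<delta>_pos: "N1 - c_rho + 2 * eps > 0"
  shows "real (card X) \<le> real (card C) * (V - eps / (N1 - c_rho + 2 * eps) * S)"
proof -
  define \<delta> where "\<delta> = N1 - c_rho + 2 * eps"
  define total_excess where "total_excess = (\<Sum>x\<in>X. excess x)"
  have total_excess: "total_excess = real (card C) * V - real (card X)"
    using sum_cover_count[OF ball] by (simp add: total_excess_def excess_def sum_subtractf)
  have "eps * (real (card C) * S) \<le> \<delta> * total_excess"
  proof -
    have "eps * (real (card C) * S) \<le> eps * (real (card tight) + 2 * total_excess)"
      using sum_boundary_count[OF sphere] sum_boundary_count_le eps_nonneg
      by (intro mult_left_mono) (auto simp: total_excess_def)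
    also have "\<dots> \<le> \<delta> * total_excess"
      using eps_card_tight_le by (simp add: \<delta>_def total_excess_def algebra_simps)
    finally show ?thesis .
  qed
  moreover have "\<delta> > 0" using \<delta>_pos by (simp add: \<delta>_def)
  ultimately have "eps / \<delta> * (real (card C) * S) \<le> total_excess"
    by (simp add: pos_divide_le_eq mult.commute)
  with total_excess have "real (card X) \<le> real (card C) * V - eps / \<delta> * (real (card C) * S)"
    by linarith
  then show ?thesis
    by (simp add: \<delta>_def right_diff_distrib mult.left_commute)
qed

end

lemma cC_less_NC_one:
  assumes "q \<ge> 2" "1 \<le> \<rho>" "\<rho> \<le> r" "2 * r \<le> n"
  shows "cC q \<rho> < NC q n r 1"
proof -
  have pos: "gauss_binom q m 1 > 0" if "m \<ge> 1" for m using gauss_binom_pos[OF assms(1) that] .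
  have "cC q \<rho> = gauss_binom q \<rho> 1 * gauss_binom q \<rho> 1" by (simp add: cC_def power2_eq_square)
  also have "\<dots> \<le> gauss_binom q r 1 * gauss_binom q (n - r) 1"
    using assms pos[of \<rho>] pos[of r] by (intro mult_mono gauss_binom_one_mono) auto
  also have "\<dots> < real q * (gauss_binom q r 1 * gauss_binom q (n - r) 1)"
    using assms pos[of r] pos[of "n - r"] by simp
  also have "\<dots> = NC q n r 1" by (simp add: NC_def gauss_binom_def)
  finally show ?thesis .
qed

lemma covrad_le_iff:
  fixes C :: "('a::{field,finite}^'n) set set"
  assumes C: "C \<noteq> {}" and X: "Esub r \<noteq> ({} :: ('a^'n) set set)"
  shows "covrad r C \<le> \<rho> \<longleftrightarrow> (\<forall>U\<in>Esub r. \<exists>D\<in>C. dI U D \<le> \<rho>)"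
proof -
  have "finite C" by (rule finite_subset[of _ UNIV]) auto
  have "{dI U D |D. D \<in> C} = dI U ` C" for U by auto
  then have Min: "Min {dI U D |D. D \<in> C} \<le> \<rho> \<longleftrightarrow> (\<exists>D\<in>C. dI U D \<le> \<rho>)" for U
    using \<open>finite C\<close> C by (simp add: Min_le_iff)
  have "{Min {dI U D |D. D \<in> C} |U. U \<in> (Esub r :: ('a^'n) set set)}
      = (\<lambda>U. Min {dI U D |D. D \<in> C}) ` Esub r"
    by auto
  then show ?thesis using finite_Esub X Min by (simp add: covrad_def Max_le_iff)
qed

lemma KC_attained:
  assumes "r \<le> CARD('n)"
  obtains C :: "('a::{field,finite}^'n::finite) set set"
  where "C \<subseteq> Esub r" "card C = KC TYPE('a) TYPE('n) r \<rho>"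
    "\<forall>U\<in>Esub r. \<exists>D\<in>C. dI U D \<le> \<rho>"
proof -
  let ?X = "Esub r :: ('a^'n) set set"
  have "real (card ?X) > 0"
    using card_Esub[OF assms, where 'a='a] gauss_binom_pos[OF card_field_ge_2[where 'a='a] assms] by simp
  then have X: "?X \<noteq> {}" by auto
  have "\<forall>U\<in>?X. \<exists>D\<in>?X. dI U D \<le> \<rho>"
  proof
    fix U assume "U \<in> ?X"
    then show "\<exists>D\<in>?X. dI U D \<le> \<rho>" using dI_self[of U r] by (intro bexI[of _ U]) simp_all
  qed
  then have "covrad r ?X \<le> \<rho>" using covrad_le_iff[OF X X] by blast
  then have "\<exists>k C. C \<subseteq> ?X \<and> C \<noteq> {} \<and> card C = k \<and> covrad r C \<le> \<rho>"
    using X by blast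
  from LeastI_ex[OF this] obtain C :: "('a^'n) set set"
    where "C \<subseteq> ?X" "C \<noteq> {}" "card C = KC TYPE('a) TYPE('n) r \<rho>" "covrad r C \<le> \<rho>"
    unfolding KC_def by blast
  with covrad_le_iff[OF _ X] show thesis by (intro that) auto
qed

lemma regular_covering_Esub:
  fixes C :: "('a::{field,finite}^'n::finite) set set"
  assumes C: "C \<subseteq> Esub r" "\<forall>U\<in>Esub r. \<exists>D\<in>C. dI U D \<le> \<rho>"
    and \<rho>: "0 < \<rho>" "\<rho> < r" and n: "2 * r \<le> CARD('n)"
  shows "regular_covering (Esub r) dI C \<rho> (NC CARD('a) CARD('n) r 1) (bC CARD('a) CARD('n) r \<rho>)
    (cC CARD('a) \<rho>) (cC CARD('a) (\<rho> + 1))"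
proof
  show "real (card {y \<in> Esub r. dI x y = 1}) = NC CARD('a) CARD('n) r 1"
    if x: "x \<in> (Esub r :: ('a^'n) set set)" for x
  proof -
    have "{y \<in> Esub r. dI x y = 1} = {y \<in> Esub r. dI y x = 1}" using dI_commute[OF x] by auto
    then show ?thesis using card_dI_sphere[OF x, of 1] \<rho> n by simp
  qed
  show "cC CARD('a) (\<rho> + 1) > 0"
    using gauss_binom_pos[OF card_field_ge_2[where 'a='a], of 1 "\<rho> + 1"] by (simp add: cC_def)
  show "cC CARD('a) \<rho> \<le> NC CARD('a) CARD('n) r 1"
    using cC_less_NC_one[OF card_field_ge_2[where 'a='a], of \<rho> r "CARD('n)"] \<rho> n by simp
  show "real (card {y \<in> Esub r. dI x y = 1 \<and> dI y c = \<rho> + 1}) = bC CARD('a) CARD('n) r \<rho>"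
    if "x \<in> (Esub r :: ('a^'n) set set)" "c \<in> Esub r" "dI x c = \<rho>" for x c
    using card_farther_neighbours[OF that] \<rho> n by simp
  show "real (card {y \<in> Esub r. dI x y = 1 \<and> dI y c = \<rho> - 1}) = cC CARD('a) \<rho>"
    if "x \<in> (Esub r :: ('a^'n) set set)" "c \<in> Esub r" "dI x c = \<rho>" for x c
    using card_closer_neighbours[OF that] \<rho> by simp
  show "real (card {y \<in> Esub r. dI x y = 1 \<and> dI y c = \<rho>}) = cC CARD('a) (\<rho> + 1)"
    if "x \<in> (Esub r :: ('a^'n) set set)" "c \<in> Esub r" "dI x c = \<rho> + 1" for x c
    using card_closer_neighbours[OF that] by simp
qed (use assms finite_Esub dI_commute dI_triangle in auto)

lemma divide_le_of_le_mult:
  fixes a b d :: real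
  assumes "0 < a" "a \<le> b * d" "0 \<le> b"
  shows "a / d \<le> b"
proof -
  have "0 < d" using assms by (metis mult_nonneg_nonpos not_less order.strict_trans2)
  then show ?thesis using assms(2) by (simp add: pos_divide_le_eq mult.commute)
qed

lemma card_Esub_le_covering_code:
  fixes C :: "('a::{field,finite}^'n::finite) set set" and r \<rho> :: nat
  defines "q \<equiv> CARD('a)" and "n \<equiv> CARD('n)"
  defines "\<epsilon> \<equiv> of_int \<lceil>bC q n r \<rho> / cC q (\<rho>+1)\<rceil> * cC q (\<rho>+1) - bC q n r \<rho>"
  defines "\<delta> \<equiv> NC q n r 1 - cC q \<rho> + 2 * \<epsilon>"
  assumes C: "C \<subseteq> Esub r" "\<forall>U\<in>Esub r. \<exists>D\<in>C. dI U D \<le> \<rho>"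
    and \<rho>: "0 < \<rho>" "\<rho> < r" and n: "2 * r \<le> n"
  shows "gauss_binom q n r \<le> real (card C) * (VC q n r \<rho> - \<epsilon> / \<delta> * NC q n r \<rho>)"
proof -
  have n': "2 * r \<le> CARD('n)" using n by (simp add: n_def)
  interpret regular_covering "Esub r" dI C \<rho> "NC q n r 1" "bC q n r \<rho>" "cC q \<rho>" "cC q (\<rho> + 1)"
    unfolding q_def n_def by (rule regular_covering_Esub[OF C \<rho> n'])
  have "real (card (Esub r :: ('a^'n) set set))
      \<le> real (card C) * (VC q n r \<rho> - eps / (NC q n r 1 - cC q \<rho> + 2 * eps) * NC q n r \<rho>)"
  proof (rule improved_sphere_covering_bound)
    show "real (card {y \<in> Esub r. dI y c \<le> \<rho>}) = VC q n r \<rho>"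
      and "real (card {y \<in> Esub r. dI y c = \<rho>}) = NC q n r \<rho>" if "c \<in> C" for c
      using card_dI_ball[of c r \<rho>] card_dI_sphere[of c r \<rho>] that C(1) \<rho> n'
      by (auto simp: q_def n_def)
    show "NC q n r 1 - cC q \<rho> + 2 * eps > 0"
      using cC_less_NC_one[of q \<rho> r n] eps_nonneg \<rho> n card_field_ge_2[where 'a='a]
      by (simp add: q_def)
  qed
  moreover have "eps = \<epsilon>" unfolding eps_def \<epsilon>_def ..
  ultimately show ?thesis
    using card_Esub[of r, where 'a='a and 'n='n] n' by (simp add: \<delta>_def q_def n_def)
qed

theorem proposition7:
  fixes r \<rho> :: nat
  defines "q \<equiv> CARD('a::{field,finite})"
    and "n \<equiv> CARD('n::finite)"
  defines "\<epsilon> \<equiv> of_int \<lceil>bC q n r \<rho> / cC q (\<rho>+1)\<rceil> * cC q (\<rho>+1) - bC q n r \<rho>"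
  defines "\<delta> \<equiv> NC q n r 1 - cC q \<rho> + 2 * \<epsilon>"
  assumes "r \<le> n div 2" and "0 < \<rho>" and "\<rho> < r"
  shows "real (KC TYPE('a) TYPE('n) r \<rho>)
           \<ge> gauss_binom q n r / (VC q n r \<rho> - \<epsilon> / \<delta> * NC q n r \<rho>)"
proof -
  have n: "2 * r \<le> CARD('n)" using assms(5) by (simp add: n_def)
  then have "r \<le> CARD('n)" by simp
  then obtain C :: "('a^'n) set set" where C: "C \<subseteq> Esub r"
    "card C = KC TYPE('a) TYPE('n) r \<rho>" "\<forall>U\<in>Esub r. \<exists>D\<in>C. dI U D \<le> \<rho>"
    by (rule KC_attained)
  have bound: "gauss_binom q n r \<le> real (card C) * (VC q n r \<rho> - \<epsilon> / \<delta> * NC q n r \<rho>)"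
    unfolding q_def n_def \<epsilon>_def \<delta>_def
    by (rule card_Esub_le_covering_code[OF C(1,3) assms(6,7) n])
  have "gauss_binom q n r > 0"
    using gauss_binom_pos[OF card_field_ge_2[where 'a='a], of r "CARD('n)"] n by (simp add: q_def n_def)
  from divide_le_of_le_mult[OF this bound] show ?thesis
    using C(2) by simp
qed

end
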